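(* \textsc{Max $k$-SAT} (as defined in the context) can be solved in time $O(2^m)$ up to factors polynomial in the input size, where $m$ is the number of clauses of the input formula.
   Context: \textsc{Max $k$-SAT} (here a cardinality-constrained satisfiability problem): the input is a CNF formula $\phi$ with $m$ clauses over a set $X$ of $n$ variables, and integers $k$ and $p$. The question is whether there is a subset $S\subseteq X$ with $|S|\le k$ such that the assignment setting the variables of $S$ to true and all variables of $X\setminus S$ to false satisfies at least $p$ clauses of $\phi$. *)

theory Defs
  imports Complex_Main "HOL-Library.Log_Nat"
begin

text \<open>Variables are natural numbers; the variable set is X = {0..<n}.
  A literal is a pair (b, v): (True, v) is the positive literal v, (False, v) is its negation.\<close>

type_synonym lit = "bool \<times> nat"
type_synonym clause = "lit list"
type_synonym cnf = "clause list"

definition wf_cnf :: "nat \<Rightarrow> cnf \<Rightarrow> bool" where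
  "wf_cnf n phi \<longleftrightarrow> (\<forall>C\<in>set phi. \<forall>(b, v)\<in>set C. v < n)"

text \<open>Clause C is satisfied by the assignment setting exactly the variables of S true.\<close>
definition clause_sat :: "nat set \<Rightarrow> clause \<Rightarrow> bool" where
  "clause_sat S C \<longleftrightarrow> (\<exists>(b, v)\<in>set C. (v \<in> S) = b)"

definition num_sat :: "nat set \<Rightarrow> cnf \<Rightarrow> nat" where
  "num_sat S phi = length (filter (clause_sat S) phi)"

definition max_k_sat :: "nat \<Rightarrow> cnf \<Rightarrow> nat \<Rightarrow> nat \<Rightarrow> bool" where
  "max_k_sat n phi k p \<longleftrightarrow>
     (\<exists>S. S \<subseteq> {0..<n} \<and> card S \<le> k \<and> num_sat S phi \<ge> p)"

definition encode_clause :: "clause \<Rightarrow> nat list" where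
  "encode_clause C = length C # concat (map (\<lambda>(b, v). [if b then 1 else 0, v]) C)"

definition encode :: "nat \<Rightarrow> cnf \<Rightarrow> nat \<Rightarrow> nat \<Rightarrow> nat list" where
  "encode n phi k p = [n, k, p, length phi] @ concat (map encode_clause phi)"

definition input_size :: "nat list \<Rightarrow> nat" where
  "input_size xs = (\<Sum>x\<leftarrow>xs. floorlog 2 x + 1)"

text \<open>State: (registers, memory). Registers are addressed directly, memory indirectly
  through registers. The input is placed in memory cells 0..len-1; the answer is
  read from register 0 (nonzero = yes).\<close>

datatype com =
    Skip
  | Const nat nat
  | Add nat nat nat
  | Sub nat nat nat        (* r := a - b (truncated) *)
  | Load nat nat
  | Store nat nat
  | Seq com com
  | If nat com com
  | While nat com

type_synonym state = "(nat \<Rightarrow> nat) \<times> (nat \<Rightarrow> nat)"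

inductive exec :: "com \<Rightarrow> state \<Rightarrow> nat \<Rightarrow> state \<Rightarrow> bool" where
  Skip: "exec Skip s 1 s"
| Const: "exec (Const r c) (R, M) 1 (R(r := c), M)"
| Add: "exec (Add r a b) (R, M) 1 (R(r := R a + R b), M)"
| Sub: "exec (Sub r a b) (R, M) 1 (R(r := R a - R b), M)"
| Load: "exec (Load r a) (R, M) 1 (R(r := M (R a)), M)"
| Store: "exec (Store a b) (R, M) 1 (R, M(R a := R b))"
| Seq: "exec c1 s t1 s1 \<Longrightarrow> exec c2 s1 t2 s2 \<Longrightarrow> exec (Seq c1 c2) s (t1 + t2) s2"
| IfT: "fst s r \<noteq> 0 \<Longrightarrow> exec c1 s t s' \<Longrightarrow> exec (If r c1 c2) s (t + 1) s'"
| IfF: "fst s r = 0 \<Longrightarrow> exec c2 s t s' \<Longrightarrow> exec (If r c1 c2) s (t + 1) s'"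
| WhileF: "fst s r = 0 \<Longrightarrow> exec (While r c) s 1 s"
| WhileT: "fst s r \<noteq> 0 \<Longrightarrow> exec c s t1 s1 \<Longrightarrow> exec (While r c) s1 t2 s2
           \<Longrightarrow> exec (While r c) s (t1 + t2 + 1) s2"

definition init_state :: "nat list \<Rightarrow> state" where
  "init_state xs = ((\<lambda>_. 0), (\<lambda>i. if i < length xs then xs ! i else 0))"

end

theory Submission
  imports Defs
begin

text \<open>The program runs a dynamic programme over the variables whose states are the sets of
  clauses. After a set \<open>W\<close> of variables has been processed, entry \<open>U\<close> of the table (a number
  below \<open>2 ^ m\<close> read as a set of clauses) holds the least number of variables of \<open>W\<close> that must be
  set true for the literals over \<open>W\<close> to satisfy exactly the clauses \<open>U\<close>, capped at \<open>k + 1\<close>.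
  Adding a variable \<open>v\<close> pushes the table forward along \<open>U \<mapsto> U \<union> clauses_with phi False v\<close>
  (\<open>v\<close> false) and, at cost one, along \<open>U \<mapsto> U \<union> clauses_with phi True v\<close> (\<open>v\<close> true); each push
  is carried out one clause, that is one bit, at a time, in \<open>O(2 ^ m)\<close> steps. In the end the
  answer is yes iff some \<open>U\<close> with at least \<open>p\<close> elements has an entry at most \<open>k\<close>. Every variable
  is processed, at its first occurrence, by one scan over the at most \<open>N\<close> literal occurrences
  (\<open>N\<close> the length of the input), so the whole run takes \<open>O(2 ^ m N ^ 2)\<close> steps.\<close>

section \<open>Weakest preconditions with step counts\<close>

definition wp :: "com \<Rightarrow> (nat \<Rightarrow> state \<Rightarrow> bool) \<Rightarrow> state \<Rightarrow> bool" where
  "wp c Q s \<longleftrightarrow> (\<exists>t s'. exec c s t s' \<and> Q t s')"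

abbreviation runs :: "com \<Rightarrow> state \<Rightarrow> nat \<Rightarrow> (state \<Rightarrow> bool) \<Rightarrow> bool" where
  "runs c s b Q \<equiv> wp c (\<lambda>t s'. Q s' \<and> t \<le> b) s"

inductive_cases exec_SkipE: "exec Skip s t s'"
inductive_cases exec_ConstE: "exec (Const r c) s t s'"
inductive_cases exec_AddE: "exec (Add r a b) s t s'"
inductive_cases exec_SubE: "exec (Sub r a b) s t s'"
inductive_cases exec_LoadE: "exec (Load r a) s t s'"
inductive_cases exec_StoreE: "exec (Store a b) s t s'"
inductive_cases exec_SeqE: "exec (Seq c1 c2) s t s'"
inductive_cases exec_IfE: "exec (If r c1 c2) s t s'"
inductive_cases exec_WhileE: "exec (While r c) s t s'"

lemma wp_Skip [simp]: "wp Skip Q s = Q 1 s"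
  unfolding wp_def by (fastforce elim: exec_SkipE intro: exec.Skip)

lemma wp_Const [simp]: "wp (Const r c) Q s = Q 1 ((fst s)(r := c), snd s)"
  unfolding wp_def by (cases s) (fastforce elim: exec_ConstE intro: exec.Const)

lemma wp_Add [simp]: "wp (Add r a b) Q s = Q 1 ((fst s)(r := fst s a + fst s b), snd s)"
  unfolding wp_def by (cases s) (fastforce elim: exec_AddE intro: exec.Add)

lemma wp_Sub [simp]: "wp (Sub r a b) Q s = Q 1 ((fst s)(r := fst s a - fst s b), snd s)"
  unfolding wp_def by (cases s) (fastforce elim: exec_SubE intro: exec.Sub)

lemma wp_Load [simp]: "wp (Load r a) Q s = Q 1 ((fst s)(r := snd s (fst s a)), snd s)"
  unfolding wp_def by (cases s) (fastforce elim: exec_LoadE intro: exec.Load)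

lemma wp_Store [simp]: "wp (Store a b) Q s = Q 1 (fst s, (snd s)(fst s a := fst s b))"
  unfolding wp_def by (cases s) (fastforce elim: exec_StoreE intro: exec.Store)

lemma wp_Seq [simp]: "wp (Seq c1 c2) Q s = wp c1 (\<lambda>t1 s1. wp c2 (\<lambda>t2. Q (t1 + t2)) s1) s"
  unfolding wp_def by (blast elim: exec_SeqE intro: exec.Seq)

lemma wp_If [simp]:
  "wp (If r c1 c2) Q s = (if fst s r \<noteq> 0 then wp c1 (\<lambda>t. Q (t + 1)) s else wp c2 (\<lambda>t. Q (t + 1)) s)"
proof -
  have "exec (If r c1 c2) s t' s' \<longleftrightarrow>
      (\<exists>t. t' = t + 1 \<and> exec (if fst s r \<noteq> 0 then c1 else c2) s t s')" for t' s'
    by (auto elim: exec_IfE intro: exec.IfT[folded Suc_eq_plus1] exec.IfF[folded Suc_eq_plus1])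
  then show ?thesis unfolding wp_def by auto
qed

lemma wp_While_False: "fst s r = 0 \<Longrightarrow> wp (While r c) Q s = Q 1 s"
  unfolding wp_def by (fastforce elim: exec_WhileE intro: exec.WhileF)

lemma wp_While_True:
  "fst s r \<noteq> 0 \<Longrightarrow> wp c (\<lambda>t1 s1. wp (While r c) (\<lambda>t2. Q (t1 + t2 + 1)) s1) s \<Longrightarrow> wp (While r c) Q s"
  unfolding wp_def by (blast intro: exec.WhileT)

lemma wp_mono: "wp c Q s \<Longrightarrow> (\<And>t s'. Q t s' \<Longrightarrow> Q' t s') \<Longrightarrow> wp c Q' s"
  unfolding wp_def by blast

lemma runs_Seq:
  assumes "runs c1 s b1 Q" and "\<And>s'. Q s' \<Longrightarrow> runs c2 s' b2 R"
  shows "runs (Seq c1 c2) s (b1 + b2) R"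
  unfolding wp_Seq using assms(1) by (rule wp_mono) (auto elim!: wp_mono dest!: assms(2))

lemma runs_mono: "runs c s b Q \<Longrightarrow> b \<le> b' \<Longrightarrow> (\<And>s'. Q s' \<Longrightarrow> R s') \<Longrightarrow> runs c s b' R"
  by (auto elim!: wp_mono)

text \<open>Every loop of the program counts a register down by one per iteration, so this is the only
  loop rule needed.\<close>

lemma runs_While_countdown:
  assumes body: "\<And>u s. I (Suc u) s \<Longrightarrow> fst s r = Suc u \<Longrightarrow> runs c s b (\<lambda>s'. I u s' \<and> fst s' r = u)"
  shows "I x s \<Longrightarrow> fst s r = x \<Longrightarrow> runs (While r c) s ((x + 1) * (b + 1)) (I 0)"
proof (induction x arbitrary: s)
  case 0
  then show ?case by (simp add: wp_While_False)
next
  case (Suc x)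
  show ?case
  proof (rule wp_While_True)
    show "fst s r \<noteq> 0" using Suc.prems by simp
    show "wp c (\<lambda>t1 s1. wp (While r c) (\<lambda>t2 s2. I 0 s2 \<and> t1 + t2 + 1 \<le> (Suc x + 1) * (b + 1)) s1) s"
    proof (rule wp_mono[OF body[OF Suc.prems]])
      fix t1 s1 assume step: "(I x s1 \<and> fst s1 r = x) \<and> t1 \<le> b"
      then have "runs (While r c) s1 ((x + 1) * (b + 1)) (I 0)" using Suc.IH by blast
      then show "wp (While r c) (\<lambda>t2 s2. I 0 s2 \<and> t1 + t2 + 1 \<le> (Suc x + 1) * (b + 1)) s1"
        by (rule wp_mono) (use step in auto)
    qed
  qed
qed

lemma runs_countdown_loop:
  assumes init: "runs c0 s b0 (\<lambda>s'. I x s' \<and> fst s' r = x)"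
    and body: "\<And>u s. I (Suc u) s \<Longrightarrow> fst s r = Suc u \<Longrightarrow> runs c s b (\<lambda>s'. I u s' \<and> fst s' r = u)"
  shows "runs (Seq c0 (While r c)) s (b0 + (x + 1) * (b + 1)) (I 0)"
  using init
proof (rule runs_Seq)
  fix s' assume "I x s' \<and> fst s' r = x"
  then show "runs (While r c) s' ((x + 1) * (b + 1)) (I 0)"
    by (intro runs_While_countdown[where I = I, OF body]) simp_all
qed

section \<open>The input encoding\<close>

text \<open>Clause \<open>i\<close> of \<open>phi\<close> is stored from address \<open>clause_start phi i\<close> on: its length, followed by
  one pair (polarity, variable) per literal.\<close>

definition clause_start :: "cnf \<Rightarrow> nat \<Rightarrow> nat" where
  "clause_start phi i = 4 + (\<Sum>C\<leftarrow>take i phi. 1 + 2 * length C)"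

definition occs_before :: "cnf \<Rightarrow> nat \<Rightarrow> nat" where
  "occs_before phi i = (\<Sum>C\<leftarrow>take i phi. length C)"

definition occurrences :: "cnf \<Rightarrow> (bool \<times> nat \<times> nat) list" where
  "occurrences phi = concat (map (\<lambda>i. map (\<lambda>(b, v). (b, v, i)) (phi ! i)) [0..<length phi])"

definition stores :: "nat list \<Rightarrow> (nat \<Rightarrow> nat) \<Rightarrow> bool" where
  "stores xs M \<longleftrightarrow> (\<forall>a<length xs. M a = xs ! a)"

lemma nth_concat_take:
  assumes "i < length xss" "q < length (xss ! i)"
  shows "concat xss ! (sum_list (map length (take i xss)) + q) = xss ! i ! q"
  using assms
proof (induction xss arbitrary: i)
  case (Cons xs xss)
  then show ?case by (cases i) (simp_all add: nth_append add.assoc)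
qed simp

lemma clause_start_Suc:
  "i < length phi \<Longrightarrow> clause_start phi (Suc i) = clause_start phi i + 1 + 2 * length (phi ! i)"
  unfolding clause_start_def by (simp add: take_Suc_conv_app_nth)

lemma occs_before_Suc: "i < length phi \<Longrightarrow> occs_before phi (Suc i) = occs_before phi i + length (phi ! i)"
  unfolding occs_before_def by (simp add: take_Suc_conv_app_nth)

lemma clause_start_mono: "i \<le> j \<Longrightarrow> clause_start phi i \<le> clause_start phi j"
proof -
  assume "i \<le> j"
  then obtain d where "take j phi = take i phi @ take d (drop i phi)"
    by (metis le_Suc_ex take_add)
  then show ?thesis unfolding clause_start_def by simp
qed

lemma length_encode_clause: "length (encode_clause C) = 1 + 2 * length C"
proof -
  have "length (concat (map (\<lambda>(b, v). [if b then 1 else 0, v]) C)) = 2 * length C"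
    by (induction C) auto
  then show ?thesis unfolding encode_clause_def by simp
qed

lemma length_encode: "length (encode n phi k p) = clause_start phi (length phi)"
  unfolding encode_def clause_start_def by (simp add: length_concat comp_def length_encode_clause)

lemma nth_encode_clause_literal:
  assumes "q < length C"
  shows "encode_clause C ! (1 + 2 * q) = of_bool (fst (C ! q))"
    and "encode_clause C ! (2 + 2 * q) = snd (C ! q)"
proof -
  let ?xss = "map (\<lambda>(b, v). [if b then 1 else 0, v]) C"
  have "map length (take q ?xss) = replicate q 2"
    using assms by (auto intro!: nth_equalityI split: prod.splits)
  then have pos: "sum_list (map length (take q ?xss)) = 2 * q"
    by (simp add: sum_list_replicate)
  obtain b v where bv: "C ! q = (b, v)" by fastforce
  have "?xss ! q = [if b then 1 else 0, v]" using assms bv by simp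
  then have "concat ?xss ! (2 * q) = of_bool b" "concat ?xss ! Suc (2 * q) = v"
    using nth_concat_take[of q ?xss 0] nth_concat_take[of q ?xss 1] assms pos by simp_all
  then show "encode_clause C ! (1 + 2 * q) = of_bool (fst (C ! q))"
    and "encode_clause C ! (2 + 2 * q) = snd (C ! q)"
    unfolding encode_clause_def using bv by simp_all
qed

lemma nth_encode_clause:
  assumes "i < length phi" "j < 1 + 2 * length (phi ! i)"
  shows "encode n phi k p ! (clause_start phi i + j) = encode_clause (phi ! i) ! j"
proof -
  have "sum_list (map length (take i (map encode_clause phi))) = (\<Sum>C\<leftarrow>take i phi. 1 + 2 * length C)"
    by (simp add: take_map comp_def length_encode_clause)
  then show ?thesis
    using nth_concat_take[of i "map encode_clause phi" j] assms
    unfolding encode_def clause_start_def by (simp add: nth_append length_encode_clause)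
qed

lemma encode_clause_length:
  "i < length phi \<Longrightarrow> encode n phi k p ! clause_start phi i = length (phi ! i)"
  using nth_encode_clause[of i phi 0] by (simp add: encode_clause_def)

lemma encode_literal:
  assumes "i < length phi" "q < length (phi ! i)"
  shows "encode n phi k p ! (clause_start phi i + 1 + 2 * q) = of_bool (fst (phi ! i ! q))"
    and "encode n phi k p ! (clause_start phi i + 2 + 2 * q) = snd (phi ! i ! q)"
  using nth_encode_clause[of i phi "1 + 2 * q" n k p] nth_encode_clause[of i phi "2 + 2 * q" n k p]
    nth_encode_clause_literal[OF assms(2)] assms by (simp_all add: add.assoc)

lemma length_occurrences: "length (occurrences phi) = occs_before phi (length phi)"
proof -
  have "map (\<lambda>i. length (phi ! i)) [0..<length phi] = map length phi"
    by (rule nth_equalityI) auto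
  then show ?thesis unfolding occurrences_def occs_before_def by (simp add: length_concat comp_def)
qed

lemma nth_occurrences:
  assumes "i < length phi" "q < length (phi ! i)"
  shows "occurrences phi ! (occs_before phi i + q) = (fst (phi ! i ! q), snd (phi ! i ! q), i)"
proof -
  let ?xss = "map (\<lambda>i. map (\<lambda>(b, v). (b, v, i)) (phi ! i)) [0..<length phi]"
  have "map length (take i ?xss) = map length (take i phi)"
    using assms by (auto intro!: nth_equalityI)
  then show ?thesis
    unfolding occurrences_def occs_before_def using nth_concat_take[of i ?xss q] assms
    by (auto split: prod.splits)
qed

lemma set_occurrences: "(b, v, i) \<in> set (occurrences phi) \<longleftrightarrow> i < length phi \<and> (b, v) \<in> set (phi ! i)"
  unfolding occurrences_def by auto

lemma clause_start_le_length_encode: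
  "i \<le> length phi \<Longrightarrow> clause_start phi i \<le> length (encode n phi k p)"
  unfolding length_encode by (rule clause_start_mono)

lemma length_le_length_encode: "length phi \<le> length (encode n phi k p)"
proof -
  have "length phi \<le> (\<Sum>C\<leftarrow>phi. 1 + 2 * length C)"
    by (induction phi) auto
  then show ?thesis unfolding length_encode clause_start_def by simp
qed

lemma length_occurrences_le_length_encode: "length (occurrences phi) \<le> length (encode n phi k p)"
proof -
  have "(\<Sum>C\<leftarrow>phi. length C) \<le> (\<Sum>C\<leftarrow>phi. 1 + 2 * length C)"
    by (rule sum_list_mono) simp
  then show ?thesis unfolding length_occurrences length_encode occs_before_def clause_start_def by simp
qed

text \<open>Registers 1 and 13 hold the constants 1 and 0 throughout the program. A walk over the
  encoding keeps the address of the current literal in register 5, the number of clauses still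
  to visit in register 6, the number of literals of the current clause still to visit in
  register 7 and the index of the current clause in register 12.\<close>

definition walk_clause :: "com \<Rightarrow> com" where
  "walk_clause body = While 7 (Seq body (Seq (Add 5 5 1) (Seq (Add 5 5 1) (Sub 7 7 1))))"

definition walk :: "com \<Rightarrow> com" where
  "walk body = While 6 (Seq (Seq (Load 7 5) (Add 5 5 1))
     (Seq (walk_clause body) (Seq (Add 12 12 1) (Sub 6 6 1))))"

context
  fixes n k p :: nat and phi :: cnf and I :: "nat \<Rightarrow> state \<Rightarrow> bool" and body :: com and b :: nat
  assumes body: "\<And>i q s. i < length phi \<Longrightarrow> q < length (phi ! i) \<Longrightarrow> I (occs_before phi i + q) s \<Longrightarrow>
      fst s 5 = clause_start phi i + 1 + 2 * q \<Longrightarrow> fst s 12 = i \<Longrightarrow> fst s 1 = 1 \<Longrightarrow>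
      stores (encode n phi k p) (snd s) \<Longrightarrow>
      runs body s b (\<lambda>s'. I (occs_before phi i + q + 1) s' \<and> (\<forall>r\<in>{1,5,6,7,12}. fst s' r = fst s r)
        \<and> stores (encode n phi k p) (snd s'))"
    and stable: "\<And>j s R. I j s \<Longrightarrow> (\<forall>r. r \<notin> {5,6,7,12} \<longrightarrow> R r = fst s r) \<Longrightarrow> I j (R, snd s)"
begin

lemma runs_walk_clause:
  assumes "i < length phi" "I (occs_before phi i) s" "fst s 7 = length (phi ! i)"
    "fst s 5 = clause_start phi i + 1" "fst s 12 = i" "fst s 1 = 1" "stores (encode n phi k p) (snd s)"
  shows "runs (walk_clause body) s ((length (phi ! i) + 1) * (b + 4))
    (\<lambda>s'. I (occs_before phi (Suc i)) s' \<and> fst s' 5 = clause_start phi (Suc i) \<and> fst s' 6 = fst s 6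
       \<and> fst s' 12 = i \<and> fst s' 1 = 1 \<and> stores (encode n phi k p) (snd s'))"
proof -
  let ?l = "length (phi ! i)"
  define J where "J u s' \<longleftrightarrow> u \<le> ?l \<and> I (occs_before phi i + (?l - u)) s'
    \<and> fst s' 5 = clause_start phi i + 1 + 2 * (?l - u) \<and> fst s' 6 = fst s 6 \<and> fst s' 12 = i
    \<and> fst s' 1 = 1 \<and> stores (encode n phi k p) (snd s')" for u s'
  have step: "runs (Seq body (Seq (Add 5 5 1) (Seq (Add 5 5 1) (Sub 7 7 1)))) s1 (b + 3)
      (\<lambda>s'. J u s' \<and> fst s' 7 = u)" if J: "J (Suc u) s1" and counter: "fst s1 7 = Suc u" for u s1
  proof -
    let ?q = "?l - Suc u"
    have q: "?q < ?l" "?l - u = ?q + 1" using J unfolding J_def by auto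
    have "runs body s1 b (\<lambda>s'. I (occs_before phi i + ?q + 1) s' \<and> (\<forall>r\<in>{1,5,6,7,12}. fst s' r = fst s1 r)
        \<and> stores (encode n phi k p) (snd s'))"
      using J assms(1) q(1) unfolding J_def by (intro body) auto
    then show ?thesis
    proof (rule runs_Seq)
      fix s2 assume s2: "I (occs_before phi i + ?q + 1) s2 \<and> (\<forall>r\<in>{1,5,6,7,12}. fst s2 r = fst s1 r)
        \<and> stores (encode n phi k p) (snd s2)"
      let ?R = "(fst s2)(5 := fst s2 5 + 2, 7 := u)"
      have "I (occs_before phi i + (?l - u)) (?R, snd s2)"
        unfolding q(2) using s2 by (intro stable) auto
      then show "runs (Seq (Add 5 5 1) (Seq (Add 5 5 1) (Sub 7 7 1))) s2 3 (\<lambda>s'. J u s' \<and> fst s' 7 = u)"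
        using s2 J counter q unfolding J_def by (simp add: fun_upd_twist)
    qed
  qed
  have "runs (walk_clause body) s ((?l + 1) * (b + 3 + 1)) (J 0)"
    unfolding walk_clause_def
    by (rule runs_While_countdown[where I = J, OF step]) (use assms in \<open>auto simp: J_def\<close>)
  then show ?thesis
    by (rule runs_mono) (use assms in \<open>auto simp: J_def clause_start_Suc occs_before_Suc\<close>)
qed

lemma runs_walk:
  assumes "I 0 s" "fst s 5 = 4" "fst s 6 = length phi" "fst s 12 = 0" "fst s 1 = 1"
    "stores (encode n phi k p) (snd s)"
  defines "N \<equiv> length (encode n phi k p)"
  shows "runs (walk body) s ((N + 1) * ((N + 1) * (b + 4) + 5))
    (\<lambda>s'. I (length (occurrences phi)) s' \<and> fst s' 5 = N \<and> fst s' 1 = 1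
       \<and> stores (encode n phi k p) (snd s'))"
proof -
  let ?m = "length phi"
  define K where "K u s' \<longleftrightarrow> u \<le> ?m \<and> I (occs_before phi (?m - u)) s'
    \<and> fst s' 5 = clause_start phi (?m - u) \<and> fst s' 12 = ?m - u \<and> fst s' 1 = 1
    \<and> stores (encode n phi k p) (snd s')" for u s'
  have step: "runs (Seq (Seq (Load 7 5) (Add 5 5 1)) (Seq (walk_clause body) (Seq (Add 12 12 1) (Sub 6 6 1))))
      s1 (2 + ((N + 1) * (b + 4) + 2)) (\<lambda>s'. K u s' \<and> fst s' 6 = u)"
    if K: "K (Suc u) s1" and counter: "fst s1 6 = Suc u" for u s1
  proof -
    let ?i = "?m - Suc u"
    have i: "?i < ?m" "Suc ?i = ?m - u" using K unfolding K_def by auto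
    have l: "length (phi ! ?i) \<le> N"
      using clause_start_Suc[OF i(1)] clause_start_le_length_encode[of "Suc ?i" phi n k p] i
      unfolding N_def by simp
    have load: "runs (Seq (Load 7 5) (Add 5 5 1)) s1 2 (\<lambda>s'. fst s' 7 = length (phi ! ?i)
        \<and> fst s' 5 = clause_start phi ?i + 1 \<and> (\<forall>r. r \<notin> {5,7} \<longrightarrow> fst s' r = fst s1 r) \<and> snd s' = snd s1)"
    proof -
      have "snd s1 (clause_start phi ?i) = length (phi ! ?i)"
        using K i encode_clause_length[OF i(1), of n k p] clause_start_Suc[OF i(1)]
          clause_start_le_length_encode[of "Suc ?i" phi n k p]
        unfolding K_def stores_def by simp
      then show ?thesis using K unfolding K_def by simp
    qed
    show ?thesis
    proof (rule runs_Seq[OF load], rule runs_Seq)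
      fix s2 assume s2: "fst s2 7 = length (phi ! ?i) \<and> fst s2 5 = clause_start phi ?i + 1
        \<and> (\<forall>r. r \<notin> {5,7} \<longrightarrow> fst s2 r = fst s1 r) \<and> snd s2 = snd s1"
      have "I (occs_before phi ?i) s2"
        using stable[of "occs_before phi ?i" s1 "fst s2"] K s2 unfolding K_def by (cases s2) auto
      then have "runs (walk_clause body) s2 ((length (phi ! ?i) + 1) * (b + 4))
        (\<lambda>s'. I (occs_before phi (Suc ?i)) s' \<and> fst s' 5 = clause_start phi (Suc ?i) \<and> fst s' 6 = Suc u
          \<and> fst s' 12 = ?i \<and> fst s' 1 = 1 \<and> stores (encode n phi k p) (snd s'))"
        using runs_walk_clause[OF i(1), of s2] s2 K counter unfolding K_def by auto
      then show "runs (walk_clause body) s2 ((N + 1) * (b + 4))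
        (\<lambda>s'. I (occs_before phi (Suc ?i)) s' \<and> fst s' 5 = clause_start phi (Suc ?i) \<and> fst s' 6 = Suc u
          \<and> fst s' 12 = ?i \<and> fst s' 1 = 1 \<and> stores (encode n phi k p) (snd s'))"
        by (rule runs_mono) (use l in simp_all)
    next
      fix s3 assume s3: "I (occs_before phi (Suc ?i)) s3 \<and> fst s3 5 = clause_start phi (Suc ?i)
        \<and> fst s3 6 = Suc u \<and> fst s3 12 = ?i \<and> fst s3 1 = 1 \<and> stores (encode n phi k p) (snd s3)"
      have "I (occs_before phi (Suc ?i)) ((fst s3)(12 := Suc ?i, 6 := u), snd s3)"
        using s3 by (intro stable) auto
      then show "runs (Seq (Add 12 12 1) (Sub 6 6 1)) s3 2 (\<lambda>s'. K u s' \<and> fst s' 6 = u)"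
        using s3 i unfolding K_def by simp
    qed
  qed
  have "runs (walk body) s ((?m + 1) * (2 + ((N + 1) * (b + 4) + 2) + 1)) (K 0)"
    unfolding walk_def
    by (rule runs_While_countdown[where I = K, OF step]) (use assms in \<open>auto simp: K_def clause_start_def occs_before_def\<close>)
  moreover have "(?m + 1) * (2 + ((N + 1) * (b + 4) + 2) + 1) \<le> (N + 1) * ((N + 1) * (b + 4) + 5)"
    using length_le_length_encode[of phi n k p] unfolding N_def by (intro mult_mono) auto
  ultimately show ?thesis
    by (rule runs_mono) (auto simp: K_def N_def length_occurrences length_encode)
qed

end

text \<open>The program first copies the literal occurrences into a table of triples (polarity,
  variable, clause index) placed right after the input. Registers 2, 3 and 4 receive
  \<open>k\<close>, \<open>p\<close> and the number \<open>m\<close> of clauses, register 8 the number of occurrences,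
  register 10 the length of the input, and register 11 serves as write pointer.\<close>

definition stores_occs :: "cnf \<Rightarrow> nat \<Rightarrow> nat \<Rightarrow> (nat \<Rightarrow> nat) \<Rightarrow> bool" where
  "stores_occs phi base j M \<longleftrightarrow> (\<forall>j'<j. M (base + 3 * j') = of_bool (fst (occurrences phi ! j'))
      \<and> M (base + 3 * j' + 1) = fst (snd (occurrences phi ! j'))
      \<and> M (base + 3 * j' + 2) = snd (snd (occurrences phi ! j')))"

definition load_header :: com where
  "load_header = Seq (Const 1 1) (Seq (Const 9 1) (Seq (Load 2 9) (Seq (Const 9 2) (Seq (Load 3 9)
     (Seq (Const 9 3) (Seq (Load 4 9) (Seq (Const 5 4) (Seq (Add 6 4 13) (Seq (Const 12 0) (Const 8 0))))))))))"

definition count_occurrence :: com where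
  "count_occurrence = Add 8 8 1"

definition restart_walk :: com where
  "restart_walk = Seq (Add 10 5 13) (Seq (Add 11 5 13) (Seq (Const 5 4) (Seq (Add 6 4 13) (Const 12 0))))"

definition copy_occurrence :: com where
  "copy_occurrence = Seq (Load 9 5) (Seq (Store 11 9) (Seq (Add 11 11 1) (Seq (Add 14 5 1) (Seq (Load 9 14)
     (Seq (Store 11 9) (Seq (Add 11 11 1) (Seq (Store 11 12) (Add 11 11 1))))))))"

definition read_input :: com where
  "read_input = Seq load_header (Seq (walk count_occurrence) (Seq restart_walk (walk copy_occurrence)))"

lemma runs_copy_occurrence:
  fixes n k p :: nat and phi :: cnf
  defines "enc \<equiv> encode n phi k p"
  assumes "i < length phi" "q < length (phi ! i)" "fst s 5 = clause_start phi i + 1 + 2 * q"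
    "fst s 12 = i" "fst s 1 = 1" "stores enc (snd s)"
    "fst s 11 = length enc + 3 * (occs_before phi i + q)"
    "stores_occs phi (length enc) (occs_before phi i + q) (snd s)"
  shows "runs copy_occurrence s 9 (\<lambda>s'. fst s' 11 = fst s 11 + 3
    \<and> (\<forall>r. r \<notin> {9,11,14} \<longrightarrow> fst s' r = fst s r) \<and> stores enc (snd s')
    \<and> stores_occs phi (length enc) (occs_before phi i + q + 1) (snd s'))"
proof -
  let ?j = "occs_before phi i + q"
  have "clause_start phi i + 2 + 2 * q < clause_start phi (Suc i)"
    using assms clause_start_Suc by simp
  also have "\<dots> \<le> length enc"
    unfolding enc_def using assms by (intro clause_start_le_length_encode) simp
  finally have in_input: "clause_start phi i + 2 + 2 * q < length enc" .
  have read: "snd s (fst s 5) = of_bool (fst (phi ! i ! q))" "snd s (fst s 5 + 1) = snd (phi ! i ! q)"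
    using assms in_input encode_literal[OF assms(2,3), of n k p] unfolding stores_def enc_def
    by (auto simp: ac_simps)
  have occ: "occurrences phi ! ?j = (fst (phi ! i ! q), snd (phi ! i ! q), i)"
    using nth_occurrences assms by blast
  show ?thesis
    using assms in_input read occ unfolding copy_occurrence_def stores_occs_def stores_def
    by (auto simp: less_Suc_eq)
qed

lemma runs_read_input:
  fixes n k p :: nat and phi :: cnf
  defines "enc \<equiv> encode n phi k p" and "N \<equiv> length (encode n phi k p)"
    and "L \<equiv> length (occurrences phi)"
  shows "runs read_input (init_state enc) (50 * (N + 1) ^ 2)
    (\<lambda>s. fst s 1 = 1 \<and> fst s 13 = 0 \<and> fst s 2 = k \<and> fst s 3 = p \<and> fst s 4 = length phi
      \<and> fst s 8 = L \<and> fst s 10 = N \<and> fst s 11 = N + 3 * L \<and> stores_occs phi N L (snd s))"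
proof -
  define I1 where "I1 j s \<longleftrightarrow> fst s 8 = j \<and> fst s 2 = k \<and> fst s 3 = p \<and> fst s 4 = length phi
    \<and> fst s 13 = 0" for j and s :: state
  define I2 where "I2 j s \<longleftrightarrow> I1 L s \<and> fst s 10 = N \<and> fst s 11 = N + 3 * j
    \<and> stores_occs phi N j (snd s)" for j and s :: state
  have header: "runs load_header (init_state enc) 11 (\<lambda>s. I1 0 s \<and> fst s 5 = 4 \<and> fst s 6 = length phi
    \<and> fst s 12 = 0 \<and> fst s 1 = 1 \<and> stores enc (snd s))"
    unfolding load_header_def init_state_def I1_def enc_def stores_def encode_def by simp
  have walk1: "runs (walk count_occurrence) s ((N + 1) * ((N + 1) * (1 + 4) + 5))
      (\<lambda>s'. I1 L s' \<and> fst s' 5 = N \<and> fst s' 1 = 1 \<and> stores enc (snd s'))"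
    if "I1 0 s \<and> fst s 5 = 4 \<and> fst s 6 = length phi \<and> fst s 12 = 0 \<and> fst s 1 = 1 \<and> stores enc (snd s)" for s
    unfolding L_def N_def enc_def
    by (rule runs_walk) (use that in \<open>auto simp: I1_def count_occurrence_def enc_def\<close>)
  have walk2: "runs (walk copy_occurrence) s ((N + 1) * ((N + 1) * (9 + 4) + 5))
      (\<lambda>s'. I2 L s' \<and> fst s' 5 = N \<and> fst s' 1 = 1 \<and> stores enc (snd s'))"
    if "I2 0 s \<and> fst s 5 = 4 \<and> fst s 6 = length phi \<and> fst s 12 = 0 \<and> fst s 1 = 1 \<and> stores enc (snd s)" for s
    unfolding L_def N_def enc_def
  proof (rule runs_walk)
    fix i q s
    assume prems: "i < length phi" "q < length (phi ! i)" "I2 (occs_before phi i + q) s"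
      "fst s 5 = clause_start phi i + 1 + 2 * q" "fst s 12 = i" "fst s 1 = 1"
      "stores (encode n phi k p) (snd s)"
    show "runs copy_occurrence s 9 (\<lambda>s'. I2 (occs_before phi i + q + 1) s'
        \<and> (\<forall>r\<in>{1,5,6,7,12}. fst s' r = fst s r) \<and> stores (encode n phi k p) (snd s'))"
      by (intro runs_mono[OF runs_copy_occurrence[of i phi q s n k p]])
        (use prems in \<open>auto simp: I2_def I1_def N_def\<close>)
  qed (use that in \<open>auto simp: I2_def I1_def enc_def stores_occs_def\<close>)
  have restart: "runs restart_walk s 5 (\<lambda>s'. I2 0 s' \<and> fst s' 5 = 4 \<and> fst s' 6 = length phi
      \<and> fst s' 12 = 0 \<and> fst s' 1 = 1 \<and> stores enc (snd s'))"
    if "I1 L s \<and> fst s 5 = N \<and> fst s 1 = 1 \<and> stores enc (snd s)" for s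
    using that unfolding restart_walk_def I2_def I1_def stores_occs_def by simp
  have "runs read_input (init_state enc)
      (11 + ((N + 1) * ((N + 1) * (1 + 4) + 5) + (5 + (N + 1) * ((N + 1) * (9 + 4) + 5))))
      (\<lambda>s. I2 L s \<and> fst s 5 = N \<and> fst s 1 = 1 \<and> stores enc (snd s))"
    unfolding read_input_def
    by (rule runs_Seq[OF header runs_Seq[OF walk1 runs_Seq[OF restart walk2]]])
  moreover have "11 + ((N + 1) * ((N + 1) * (1 + 4) + 5) + (5 + (N + 1) * ((N + 1) * (9 + 4) + 5)))
      \<le> 50 * (N + 1) ^ 2"
    by (simp add: power2_eq_square algebra_simps)
  ultimately show ?thesis
    by (rule runs_mono) (auto simp: I2_def I1_def)
qed

section \<open>Clause sets as bit vectors\<close>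

definition bitset :: "nat \<Rightarrow> nat set" where
  "bitset U = {i. bit U i}"

lemma bitset_0 [simp]: "bitset 0 = {}"
  unfolding bitset_def by simp

lemma bitset_inj: "bitset U = bitset V \<Longrightarrow> U = V"
  unfolding bitset_def by (rule bit_eqI) blast

lemma bit_less_power: "(U::nat) < 2 ^ m \<Longrightarrow> bit U i \<Longrightarrow> i < m"
  by (metis bit_take_bit_iff take_bit_nat_eq_self_iff)

lemma bitset_subset: "U < 2 ^ m \<Longrightarrow> bitset U \<subseteq> {..<m}"
  unfolding bitset_def using bit_less_power by auto

lemma bitset_add_power: "(U::nat) < 2 ^ i \<Longrightarrow> bitset (U + 2 ^ i) = insert i (bitset U)"
  unfolding bitset_def by (subst disjunctive_add) (auto simp: bit_simps dest: bit_less_power)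

lemma bitset_surj: "T \<subseteq> {..<m} \<Longrightarrow> \<exists>U<2 ^ m. bitset U = T"
proof (induction m arbitrary: T)
  case 0
  then show ?case by (intro exI[of _ 0]) auto
next
  case (Suc m)
  have "T - {m} \<subseteq> {..<m}" using Suc.prems by auto
  then obtain U where U: "U < 2 ^ m" "bitset U = T - {m}" using Suc.IH by blast
  show ?case
  proof (cases "m \<in> T")
    case True
    then have "bitset (U + 2 ^ m) = T" using bitset_add_power[OF U(1)] U(2) by auto
    then show ?thesis using U(1) by (intro exI[of _ "U + 2 ^ m"]) simp
  next
    case False
    then show ?thesis using U by (intro exI[of _ U]) auto
  qed
qed

lemma bitset_diff_power:
  assumes "bit (U::nat) i"
  shows "2 ^ i \<le> U" and "bitset (U - 2 ^ i) = bitset U - {i}"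
proof -
  have "unset_bit i U + 2 ^ i = or (unset_bit i U) (2 ^ i)"
    by (rule disjunctive_add) (auto simp: bit_simps)
  also have "\<dots> = U" by (rule bit_eqI) (auto simp: bit_simps assms)
  finally have U: "U = unset_bit i U + 2 ^ i" ..
  then show "2 ^ i \<le> U" by linarith
  have "U - 2 ^ i = unset_bit i U" using U by linarith
  then show "bitset (U - 2 ^ i) = bitset U - {i}" unfolding bitset_def by (auto simp: bit_simps)
qed

lemma card_bitset_add_power:
  assumes "(U::nat) < 2 ^ i"
  shows "card (bitset (U + 2 ^ i)) = Suc (card (bitset U))"
proof -
  have "finite (bitset U)" "i \<notin> bitset U"
    using bitset_subset[OF assms] finite_subset by auto
  then show ?thesis using bitset_add_power[OF assms] by simp
qed

lemma bit_iff_power_le_mod: "bit (U::nat) i \<longleftrightarrow> 2 ^ i \<le> U mod (2 * 2 ^ i)"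
proof -
  have eq: "U mod (2 * 2 ^ i) = 2 ^ i * (U div 2 ^ i mod 2) + U mod 2 ^ i"
    by (simp only: mult.commute[of 2 "2 ^ i"] mod_mult2_eq)
  show ?thesis
  proof (cases "odd (U div 2 ^ i)")
    case True
    then have "2 ^ i \<le> U mod (2 * 2 ^ i)" using eq by (simp add: odd_iff_mod_2_eq_one)
    then show ?thesis using True by (simp add: bit_iff_odd)
  next
    case False
    then have "U mod (2 * 2 ^ i) < 2 ^ i" using eq by (simp add: even_iff_mod_2_eq_zero)
    then show ?thesis using False by (simp add: bit_iff_odd)
  qed
qed

text \<open>The table operation below pushes a table forward along \<open>T \<mapsto> T \<union> {i}\<close>; this is how it
  reads on the binary representations.\<close>

lemma ex_bitset_insert_iff:
  assumes "U < 2 ^ m"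
  shows "(\<exists>T<2 ^ m. bitset T \<union> {i} = bitset U \<and> P T) \<longleftrightarrow> bit U i \<and> (P U \<or> P (U - 2 ^ i))"
proof
  assume "\<exists>T<2 ^ m. bitset T \<union> {i} = bitset U \<and> P T"
  then obtain T where T: "bitset T \<union> {i} = bitset U" "P T" by blast
  then have i: "bit U i" unfolding bitset_def by auto
  have "bitset T = bitset U \<or> bitset T = bitset U - {i}" using T(1) by blast
  then have "T = U \<or> T = U - 2 ^ i" using bitset_diff_power(2)[OF i] bitset_inj by metis
  then show "bit U i \<and> (P U \<or> P (U - 2 ^ i))" using i T(2) by blast
next
  assume h: "bit U i \<and> (P U \<or> P (U - 2 ^ i))"
  then have "bitset U \<union> {i} = bitset U" "bitset (U - 2 ^ i) \<union> {i} = bitset U"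
    using bitset_diff_power(2)[of U i] unfolding bitset_def by auto
  moreover have "U - 2 ^ i < 2 ^ m" using assms by linarith
  ultimately show "\<exists>T<2 ^ m. bitset T \<union> {i} = bitset U \<and> P T" using h assms by blast
qed

section \<open>The dynamic programme\<close>

definition sat_clauses :: "cnf \<Rightarrow> nat set \<Rightarrow> nat set \<Rightarrow> nat set" where
  "sat_clauses phi W S = {i. i < length phi \<and> (\<exists>(b, v)\<in>set (phi ! i). v \<in> W \<and> (v \<in> S) = b)}"

definition achievable :: "cnf \<Rightarrow> nat set \<Rightarrow> nat \<Rightarrow> nat set \<Rightarrow> bool" where
  "achievable phi W c T \<longleftrightarrow> (\<exists>S\<subseteq>W. card S \<le> c \<and> sat_clauses phi W S = T)"

definition clauses_with :: "cnf \<Rightarrow> bool \<Rightarrow> nat \<Rightarrow> nat set" where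
  "clauses_with phi b v = {i. i < length phi \<and> (b, v) \<in> set (phi ! i)}"

definition vars_of :: "cnf \<Rightarrow> nat set" where
  "vars_of phi = {v. \<exists>b i. (b, v, i) \<in> set (occurrences phi)}"

lemma sat_clauses_subset: "sat_clauses phi W S \<subseteq> {..<length phi}"
  unfolding sat_clauses_def by auto

lemma sat_clauses_insert: "sat_clauses phi (insert v W) S = sat_clauses phi W S \<union> clauses_with phi (v \<in> S) v"
  unfolding sat_clauses_def clauses_with_def by auto

lemma sat_clauses_cong: "S \<inter> W = S' \<inter> W \<Longrightarrow> sat_clauses phi W S = sat_clauses phi W S'"
  unfolding sat_clauses_def by blast

lemma achievable_empty: "achievable phi {} c T \<longleftrightarrow> T = {}"
  unfolding achievable_def sat_clauses_def by auto

lemma achievable_insert: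
  assumes "finite W" "v \<notin> W"
  shows "achievable phi (insert v W) c U \<longleftrightarrow>
      (\<exists>T. achievable phi W c T \<and> T \<union> clauses_with phi False v = U)
    \<or> (0 < c \<and> (\<exists>T. achievable phi W (c - 1) T \<and> T \<union> clauses_with phi True v = U))"
proof
  assume "achievable phi (insert v W) c U"
  then obtain S where S: "S \<subseteq> insert v W" "card S \<le> c" "sat_clauses phi (insert v W) S = U"
    unfolding achievable_def by blast
  have fin: "finite S" using S(1) assms(1) finite_subset by auto
  have W: "sat_clauses phi W S = sat_clauses phi W (S - {v})"
    by (rule sat_clauses_cong) (use assms in auto)
  show "(\<exists>T. achievable phi W c T \<and> T \<union> clauses_with phi False v = U)
    \<or> (0 < c \<and> (\<exists>T. achievable phi W (c - 1) T \<and> T \<union> clauses_with phi True v = U))"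
  proof (cases "v \<in> S")
    case True
    then have "0 < card S" "card (S - {v}) = card S - 1" using fin card_gt_0_iff by auto
    then have "achievable phi W (c - 1) (sat_clauses phi W (S - {v}))"
      unfolding achievable_def using S by (intro exI[of _ "S - {v}"]) auto
    then show ?thesis using S True W \<open>0 < card S\<close> by (auto simp: sat_clauses_insert)
  next
    case False
    then have "achievable phi W c (sat_clauses phi W S)"
      unfolding achievable_def using S by auto
    then show ?thesis using S False by (auto simp: sat_clauses_insert)
  qed
next
  assume "(\<exists>T. achievable phi W c T \<and> T \<union> clauses_with phi False v = U)
    \<or> (0 < c \<and> (\<exists>T. achievable phi W (c - 1) T \<and> T \<union> clauses_with phi True v = U))"
  then show "achievable phi (insert v W) c U"
  proof
    assume "\<exists>T. achievable phi W c T \<and> T \<union> clauses_with phi False v = U"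
    then obtain S where S: "S \<subseteq> W" "card S \<le> c" "sat_clauses phi W S \<union> clauses_with phi False v = U"
      unfolding achievable_def by blast
    then have "v \<notin> S" using assms by auto
    then show ?thesis unfolding achievable_def using S by (intro exI[of _ S]) (auto simp: sat_clauses_insert)
  next
    assume "0 < c \<and> (\<exists>T. achievable phi W (c - 1) T \<and> T \<union> clauses_with phi True v = U)"
    then obtain S where S: "S \<subseteq> W" "card S \<le> c - 1" "sat_clauses phi W S \<union> clauses_with phi True v = U" "0 < c"
      unfolding achievable_def by blast
    have "finite S" "v \<notin> S" using S(1) assms finite_subset by auto
    moreover have "sat_clauses phi W (insert v S) = sat_clauses phi W S"
      by (rule sat_clauses_cong) (use assms in auto)
    ultimately show ?thesis unfolding achievable_def using S
      by (intro exI[of _ "insert v S"]) (auto simp: sat_clauses_insert)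
  qed
qed

lemma max_k_sat_iff_achievable:
  assumes "wf_cnf n phi"
  shows "max_k_sat n phi k p \<longleftrightarrow> (\<exists>T. achievable phi (vars_of phi) k T \<and> p \<le> card T)"
proof -
  have vars: "v \<in> vars_of phi" if "i < length phi" "(b, v) \<in> set (phi ! i)" for i b v
    using that unfolding vars_of_def set_occurrences by blast
  have "sat_clauses phi (vars_of phi) S = {i. i < length phi \<and> clause_sat S (phi ! i)}" for S
    unfolding sat_clauses_def clause_sat_def
  proof (rule Collect_cong)
    fix i
    show "(i < length phi \<and> (\<exists>(b, v)\<in>set (phi ! i). v \<in> vars_of phi \<and> (v \<in> S) = b)) \<longleftrightarrow>
        (i < length phi \<and> (\<exists>(b, v)\<in>set (phi ! i). (v \<in> S) = b))"
      using vars[of i] by blast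
  qed
  then have num_sat: "num_sat S phi = card (sat_clauses phi (vars_of phi) S)" for S
    unfolding num_sat_def length_filter_conv_card by simp
  have vars_in: "vars_of phi \<subseteq> {0..<n}"
  proof
    fix v assume "v \<in> vars_of phi"
    then obtain b i where "i < length phi" "(b, v) \<in> set (phi ! i)"
      unfolding vars_of_def set_occurrences by blast
    then show "v \<in> {0..<n}" using assms nth_mem unfolding wf_cnf_def by fastforce
  qed
  show ?thesis
  proof
    assume "max_k_sat n phi k p"
    then obtain S where S: "S \<subseteq> {0..<n}" "card S \<le> k" "p \<le> num_sat S phi"
      unfolding max_k_sat_def by blast
    have "card (S \<inter> vars_of phi) \<le> k"
      using S(1,2) card_mono[of S "S \<inter> vars_of phi"] finite_subset[OF S(1)] by auto
    moreover have "sat_clauses phi (vars_of phi) (S \<inter> vars_of phi) = sat_clauses phi (vars_of phi) S"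
      by (rule sat_clauses_cong) blast
    ultimately have "achievable phi (vars_of phi) k (sat_clauses phi (vars_of phi) S)"
      unfolding achievable_def by (intro exI[of _ "S \<inter> vars_of phi"]) simp
    then show "\<exists>T. achievable phi (vars_of phi) k T \<and> p \<le> card T" using S(3) num_sat by auto
  next
    assume "\<exists>T. achievable phi (vars_of phi) k T \<and> p \<le> card T"
    then obtain S where "S \<subseteq> vars_of phi" "card S \<le> k" "p \<le> card (sat_clauses phi (vars_of phi) S)"
      unfolding achievable_def by blast
    then show "max_k_sat n phi k p" unfolding max_k_sat_def using vars_in num_sat by auto
  qed
qed

text \<open>A DP table for the variable set \<open>W\<close> stores at \<open>U\<close> the least number of true variables of
  \<open>W\<close> that satisfy exactly the clauses \<open>bitset U\<close>, capped at \<open>k + 1\<close>.\<close>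

definition dp_table :: "cnf \<Rightarrow> nat \<Rightarrow> nat set \<Rightarrow> (nat \<Rightarrow> nat) \<Rightarrow> bool" where
  "dp_table phi k W F \<longleftrightarrow>
     (\<forall>U<2 ^ length phi. F U \<le> Suc k \<and> (\<forall>c\<le>k. F U \<le> c \<longleftrightarrow> achievable phi W c (bitset U)))"

definition forced_table :: "nat \<Rightarrow> nat \<Rightarrow> (nat \<Rightarrow> nat) \<Rightarrow> nat set \<Rightarrow> (nat \<Rightarrow> nat) \<Rightarrow> bool" where
  "forced_table m k F Z G \<longleftrightarrow>
     (\<forall>U<2 ^ m. G U \<le> Suc k \<and> (\<forall>c\<le>k. G U \<le> c \<longleftrightarrow> (\<exists>T<2 ^ m. bitset T \<union> Z = bitset U \<and> F T \<le> c)))"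

lemma dp_table_cong: "dp_table phi k W F \<Longrightarrow> (\<forall>U<2 ^ length phi. G U = F U) \<Longrightarrow> dp_table phi k W G"
  unfolding dp_table_def by simp

lemma forced_table_cong: "forced_table m k F Z G \<Longrightarrow> (\<forall>U<2 ^ m. G' U = G U) \<Longrightarrow> forced_table m k F Z G'"
  unfolding forced_table_def by simp

lemma dp_table_empty: "dp_table phi k {} (\<lambda>U. if U = 0 then 0 else Suc k)"
  unfolding dp_table_def achievable_empty using bitset_inj[of _ 0] by auto

lemma forced_table_empty: "\<forall>U<2 ^ m. F U \<le> Suc k \<Longrightarrow> forced_table m k F {} F"
  unfolding forced_table_def using bitset_inj by auto

lemma forced_table_insert:
  assumes "forced_table m k F Z G" "i < m" "Z \<subseteq> {..<m}"
  shows "forced_table m k F (insert i Z) (\<lambda>U. if bit U i then min (G U) (G (U - 2 ^ i)) else Suc k)"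
  unfolding forced_table_def
proof (intro allI impI conjI)
  fix U :: nat and c assume U: "U < 2 ^ m" and c: "c \<le> k"
  have "(if bit U i then min (G U) (G (U - 2 ^ i)) else Suc k) \<le> c \<longleftrightarrow> bit U i \<and> (G U \<le> c \<or> G (U - 2 ^ i) \<le> c)"
    using c by auto
  also have "\<dots> \<longleftrightarrow> (\<exists>T'<2 ^ m. bitset T' \<union> {i} = bitset U \<and> G T' \<le> c)"
    using ex_bitset_insert_iff[OF U, of i "\<lambda>T. G T \<le> c"] by simp
  also have "\<dots> \<longleftrightarrow> (\<exists>T<2 ^ m. bitset T \<union> insert i Z = bitset U \<and> F T \<le> c)"
  proof
    assume "\<exists>T'<2 ^ m. bitset T' \<union> {i} = bitset U \<and> G T' \<le> c"
    then obtain T' where T': "T' < 2 ^ m" "bitset T' \<union> {i} = bitset U" "G T' \<le> c" by blast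
    then obtain T where "T < 2 ^ m" "bitset T \<union> Z = bitset T'" "F T \<le> c"
      using assms(1) c unfolding forced_table_def by blast
    then show "\<exists>T<2 ^ m. bitset T \<union> insert i Z = bitset U \<and> F T \<le> c" using T' by auto
  next
    assume "\<exists>T<2 ^ m. bitset T \<union> insert i Z = bitset U \<and> F T \<le> c"
    then obtain T where T: "T < 2 ^ m" "bitset T \<union> insert i Z = bitset U" "F T \<le> c" by blast
    obtain T' where T': "T' < 2 ^ m" "bitset T' = bitset T \<union> Z"
      using bitset_surj[of "bitset T \<union> Z" m] bitset_subset[OF T(1)] assms(3) by auto
    then have "G T' \<le> c" using assms(1) T c unfolding forced_table_def by blast
    then show "\<exists>T'<2 ^ m. bitset T' \<union> {i} = bitset U \<and> G T' \<le> c" using T' T by auto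
  qed
  finally show "(if bit U i then min (G U) (G (U - 2 ^ i)) else Suc k) \<le> c \<longleftrightarrow>
      (\<exists>T<2 ^ m. bitset T \<union> insert i Z = bitset U \<and> F T \<le> c)" .
next
  fix U :: nat assume "U < 2 ^ m"
  then show "(if bit U i then min (G U) (G (U - 2 ^ i)) else Suc k) \<le> Suc k"
    using assms(1) unfolding forced_table_def by auto
qed

text \<open>Adding variable \<open>v\<close>: setting it true costs one and satisfies \<open>clauses_with phi True v\<close>,
  setting it false satisfies \<open>clauses_with phi False v\<close>.\<close>

lemma dp_table_insert:
  assumes "dp_table phi k W A" "v \<notin> W" "finite W"
    and "forced_table (length phi) k A (clauses_with phi True v) B"
    and "forced_table (length phi) k A (clauses_with phi False v) C"
  shows "dp_table phi k (insert v W) (\<lambda>U. min (min (B U + 1) (Suc k)) (C U))"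
  unfolding dp_table_def
proof (intro allI impI conjI)
  let ?m = "length phi"
  fix U :: nat and c assume U: "U < 2 ^ ?m" and c: "c \<le> k"
  have lift: "(\<exists>T<2 ^ ?m. bitset T \<union> Z = bitset U \<and> A T \<le> c') \<longleftrightarrow>
      (\<exists>T. achievable phi W c' T \<and> T \<union> Z = bitset U)" if "c' \<le> k" for Z c'
  proof
    assume "\<exists>T. achievable phi W c' T \<and> T \<union> Z = bitset U"
    then obtain T where T: "achievable phi W c' T" "T \<union> Z = bitset U" by blast
    have "T \<subseteq> {..<?m}" using T(1) sat_clauses_subset unfolding achievable_def by blast
    then obtain T0 where "T0 < 2 ^ ?m" "bitset T0 = T" using bitset_surj by blast
    then show "\<exists>T<2 ^ ?m. bitset T \<union> Z = bitset U \<and> A T \<le> c'"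
      using T assms(1) that unfolding dp_table_def by auto
  next
    assume "\<exists>T<2 ^ ?m. bitset T \<union> Z = bitset U \<and> A T \<le> c'"
    then show "\<exists>T. achievable phi W c' T \<and> T \<union> Z = bitset U"
      using assms(1) that unfolding dp_table_def by blast
  qed
  have c1: "c - 1 \<le> k" using c by simp
  have B: "B U \<le> c - 1 \<longleftrightarrow> (\<exists>T<2 ^ ?m. bitset T \<union> clauses_with phi True v = bitset U \<and> A T \<le> c - 1)"
    using assms(4) U c1 unfolding forced_table_def by blast
  have C: "C U \<le> c \<longleftrightarrow> (\<exists>T<2 ^ ?m. bitset T \<union> clauses_with phi False v = bitset U \<and> A T \<le> c)"
    using assms(5) U c unfolding forced_table_def by blast
  have "min (min (B U + 1) (Suc k)) (C U) \<le> c \<longleftrightarrow> (0 < c \<and> B U \<le> c - 1) \<or> C U \<le> c"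
    using c by auto
  also have "\<dots> \<longleftrightarrow> (0 < c \<and> (\<exists>T. achievable phi W (c - 1) T \<and> T \<union> clauses_with phi True v = bitset U))
      \<or> (\<exists>T. achievable phi W c T \<and> T \<union> clauses_with phi False v = bitset U)"
    unfolding B C lift[OF c1] lift[OF c] ..
  also have "\<dots> \<longleftrightarrow> achievable phi (insert v W) c (bitset U)"
    using achievable_insert[OF assms(3,2)] by blast
  finally show "min (min (B U + 1) (Suc k)) (C U) \<le> c \<longleftrightarrow> achievable phi (insert v W) c (bitset U)" .
qed simp

text \<open>Register 20 holds \<open>P = 2 ^ m\<close>, the number of clause sets. The tables have \<open>P\<close> entries each:
  the DP table starts at the address in register 21, two working copies at those in registers
  22 and 23, the table of cardinalities at that in register 24; register 25 holds \<open>k + 1\<close>, the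
  value standing for ``more than \<open>k\<close>''. Registers 26 and above are working registers.\<close>

definition same_except :: "(nat \<Rightarrow> nat) \<Rightarrow> (nat \<Rightarrow> nat) \<Rightarrow> nat set \<Rightarrow> bool" where
  "same_except R R' S \<longleftrightarrow> (\<forall>r. r \<notin> S \<longrightarrow> R' r = R r)"

definition pow2_into :: "nat \<Rightarrow> nat \<Rightarrow> nat \<Rightarrow> com" where
  "pow2_into y x z = Seq (Seq (Const y 1) (Add z x 13)) (While z (Seq (Add y y y) (Sub z z 1)))"

lemma runs_pow2_into:
  assumes "fst s x = e" "fst s 13 = 0" "fst s 1 = 1" "y \<notin> {1, 13, x}" "z \<notin> {1, 13, x, y}"
  shows "runs (pow2_into y x z) s (3 * e + 5)
    (\<lambda>s'. fst s' y = 2 ^ e \<and> same_except (fst s) (fst s') {y, z} \<and> snd s' = snd s)"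
proof -
  define I where "I u s' \<longleftrightarrow> u \<le> e \<and> fst s' y = 2 ^ (e - u) \<and> same_except (fst s) (fst s') {y, z}
    \<and> snd s' = snd s" for u s'
  have step: "runs (Seq (Add y y y) (Sub z z 1)) s1 2 (\<lambda>s'. I u s' \<and> fst s' z = u)"
    if "I (Suc u) s1" "fst s1 z = Suc u" for u s1
  proof -
    have "e - u = Suc (e - Suc u)" using that unfolding I_def by (simp add: Suc_diff_Suc)
    then show ?thesis using that assms unfolding I_def same_except_def by auto
  qed
  have init: "runs (Seq (Const y 1) (Add z x 13)) s 2 (\<lambda>s'. I e s' \<and> fst s' z = e)"
    using assms by (simp add: I_def same_except_def)
  have "runs (pow2_into y x z) s (2 + (e + 1) * (2 + 1)) (I 0)"
    unfolding pow2_into_def by (rule runs_countdown_loop[OF init step])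
  then show ?thesis by (rule runs_mono) (simp_all add: I_def)
qed

definition init_table :: com where
  "init_table = Seq (Seq (Add 44 20 13) (While 44 (Seq (Sub 44 44 1) (Seq (Add 46 21 44) (Store 46 25)))))
     (Store 21 13)"

lemma runs_init_table:
  assumes "fst s 20 = P" "fst s 21 = A" "fst s 25 = K" "fst s 13 = 0" "fst s 1 = 1" "0 < P"
  shows "runs init_table s (4 * P + 6) (\<lambda>s'. (\<forall>U<P. snd s' (A + U) = (if U = 0 then 0 else K))
    \<and> (\<forall>a. a < A \<or> A + P \<le> a \<longrightarrow> snd s' a = snd s a) \<and> same_except (fst s) (fst s') {44, 46})"
proof -
  define I where "I u s' \<longleftrightarrow> u \<le> P \<and> (\<forall>U. u \<le> U \<and> U < P \<longrightarrow> snd s' (A + U) = K)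
    \<and> (\<forall>a. \<not> (A + u \<le> a \<and> a < A + P) \<longrightarrow> snd s' a = snd s a) \<and> same_except (fst s) (fst s') {44, 46}"
    for u s'
  have step: "runs (Seq (Sub 44 44 1) (Seq (Add 46 21 44) (Store 46 25))) s1 3 (\<lambda>s'. I u s' \<and> fst s' 44 = u)"
    if "I (Suc u) s1" "fst s1 44 = Suc u" for u s1
    using that assms unfolding I_def same_except_def by (auto simp: less_Suc_eq_le)
  have init: "runs (Add 44 20 13) s 1 (\<lambda>s'. I P s' \<and> fst s' 44 = P)"
    using assms by (simp add: I_def same_except_def)
  have last: "runs (Store 21 13) s' 1 (\<lambda>s''. (\<forall>U<P. snd s'' (A + U) = (if U = 0 then 0 else K))
    \<and> (\<forall>a. a < A \<or> A + P \<le> a \<longrightarrow> snd s'' a = snd s a) \<and> same_except (fst s) (fst s'') {44, 46})"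
    if "I 0 s'" for s'
    using that assms unfolding I_def same_except_def by auto
  have "runs init_table s (1 + (P + 1) * (3 + 1) + 1) (\<lambda>s''. (\<forall>U<P. snd s'' (A + U) = (if U = 0 then 0 else K))
    \<and> (\<forall>a. a < A \<or> A + P \<le> a \<longrightarrow> snd s'' a = snd s a) \<and> same_except (fst s) (fst s'') {44, 46})"
    unfolding init_table_def by (rule runs_Seq[OF runs_countdown_loop[OF init step] last])
  then show ?thesis by (rule runs_mono) simp_all
qed

definition copy_entry :: com where
  "copy_entry = Seq (Sub 44 44 1) (Seq (Add 46 21 44) (Seq (Load 47 46)
     (Seq (Add 46 22 44) (Seq (Store 46 47) (Seq (Add 46 23 44) (Store 46 47))))))"

definition copy_table :: com where
  "copy_table = Seq (Add 44 20 13) (While 44 copy_entry)"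

lemma runs_copy_table:
  assumes "fst s 20 = P" "fst s 21 = A" "fst s 22 = B" "fst s 23 = C" "fst s 13 = 0" "fst s 1 = 1"
    "A + P \<le> B" "B + P \<le> C"
  shows "runs copy_table s (8 * P + 9)
    (\<lambda>s'. (\<forall>U<P. snd s' (B + U) = snd s (A + U) \<and> snd s' (C + U) = snd s (A + U))
      \<and> (\<forall>a. \<not> (B \<le> a \<and> a < B + P) \<and> \<not> (C \<le> a \<and> a < C + P) \<longrightarrow> snd s' a = snd s a)
      \<and> same_except (fst s) (fst s') {44, 46, 47})"
proof -
  define I where "I u s' \<longleftrightarrow> u \<le> P
    \<and> (\<forall>U. u \<le> U \<and> U < P \<longrightarrow> snd s' (B + U) = snd s (A + U) \<and> snd s' (C + U) = snd s (A + U))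
    \<and> (\<forall>a. \<not> (B + u \<le> a \<and> a < B + P) \<and> \<not> (C + u \<le> a \<and> a < C + P) \<longrightarrow> snd s' a = snd s a)
    \<and> same_except (fst s) (fst s') {44, 46, 47}" for u s'
  have step: "runs copy_entry s1 7 (\<lambda>s'. I u s' \<and> fst s' 44 = u)" if I: "I (Suc u) s1" and counter: "fst s1 44 = Suc u" for u s1
  proof -
    have uP: "u < P" and regs: "same_except (fst s) (fst s1) {44, 46, 47}"
      using I unfolding I_def by simp_all
    have vals: "fst s1 1 = 1" "fst s1 21 = A" "fst s1 22 = B" "fst s1 23 = C"
      using regs assms unfolding same_except_def by simp_all
    have filled: "snd s1 (B + U) = snd s (A + U) \<and> snd s1 (C + U) = snd s (A + U)" if "Suc u \<le> U" "U < P" for U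
      using I that unfolding I_def by simp
    have old: "snd s1 a = snd s a" if "\<not> (B + Suc u \<le> a \<and> a < B + P)" "\<not> (C + Suc u \<le> a \<and> a < C + P)" for a
      using I that unfolding I_def by simp
    let ?X = "snd s (A + u)"
    have X: "snd s1 (A + u) = ?X" using old assms by simp
    have "runs copy_entry s1 7 (\<lambda>s'. fst s' 44 = u \<and> same_except (fst s1) (fst s') {44, 46, 47} \<and> snd s' = (snd s1)(B + u := ?X, C + u := ?X))"
      using vals counter X unfolding copy_entry_def by (simp add: same_except_def)
    then show ?thesis
    proof (rule runs_mono)
      fix s' assume s': "fst s' 44 = u \<and> same_except (fst s1) (fst s') {44, 46, 47}
        \<and> snd s' = (snd s1)(B + u := ?X, C + u := ?X)"
      have entries: "\<forall>U. u \<le> U \<and> U < P \<longrightarrow> snd s' (B + U) = snd s (A + U) \<and> snd s' (C + U) = snd s (A + U)"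
      proof (intro allI impI)
        fix U assume U: "u \<le> U \<and> U < P"
        show "snd s' (B + U) = snd s (A + U) \<and> snd s' (C + U) = snd s (A + U)"
        proof (cases "U = u")
          case True
          then show ?thesis using s' X assms by simp
        next
          case False
          then have "Suc u \<le> U" using U by simp
          then show ?thesis using s' filled[of U] assms U by simp
        qed
      qed
      have frame: "\<forall>a. \<not> (B + u \<le> a \<and> a < B + P) \<and> \<not> (C + u \<le> a \<and> a < C + P) \<longrightarrow> snd s' a = snd s a"
      proof (intro allI impI)
        fix a assume "\<not> (B + u \<le> a \<and> a < B + P) \<and> \<not> (C + u \<le> a \<and> a < C + P)"
        then show "snd s' a = snd s a" using old[of a] s' uP by auto
      qed
      have "same_except (fst s) (fst s') {44, 46, 47}"
        using regs s' unfolding same_except_def by auto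
      then show "I u s' \<and> fst s' 44 = u"
        unfolding I_def using uP entries frame s' by (intro conjI) simp_all
    qed simp
  qed
  have init: "runs (Add 44 20 13) s 1 (\<lambda>s'. I P s' \<and> fst s' 44 = P)"
    using assms by (simp add: I_def same_except_def)
  have "runs copy_table s (1 + (P + 1) * (7 + 1)) (I 0)"
    unfolding copy_table_def by (rule runs_countdown_loop[OF init step])
  then show ?thesis by (rule runs_mono) (simp_all add: I_def)
qed

text \<open>Truncated subtraction gives \<open>x - (x - y) = min x y\<close>, which is how the routines below
  take minima without a comparison instruction.\<close>

definition combine_entry :: com where
  "combine_entry = Seq (Sub 44 44 1) (Seq (Add 46 22 44) (Seq (Load 47 46)
     (Seq (Add 47 47 1) (Seq (Sub 48 47 25) (Seq (Sub 47 47 48) (Seq (Add 46 23 44) (Seq (Load 48 46)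
     (Seq (Sub 49 47 48) (Seq (Sub 47 47 49) (Seq (Add 46 21 44) (Store 46 47)))))))))))"

definition combine_tables :: com where
  "combine_tables = Seq (Add 44 20 13) (While 44 combine_entry)"

lemma diff_diff_eq_min: "(x::nat) - (x - y) = min x y"
  by simp

lemma runs_combine_tables:
  assumes "fst s 20 = P" "fst s 21 = A" "fst s 22 = B" "fst s 23 = C" "fst s 25 = K" "fst s 13 = 0"
    "fst s 1 = 1" "A + P \<le> B" "B + P \<le> C"
  shows "runs combine_tables s (13 * P + 14)
    (\<lambda>s'. (\<forall>U<P. snd s' (A + U) = min (min (snd s (B + U) + 1) K) (snd s (C + U)))
      \<and> (\<forall>a. \<not> (A \<le> a \<and> a < A + P) \<longrightarrow> snd s' a = snd s a)
      \<and> same_except (fst s) (fst s') {44, 46, 47, 48, 49})"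
proof -
  define I where "I u s' \<longleftrightarrow> u \<le> P
    \<and> (\<forall>U. u \<le> U \<and> U < P \<longrightarrow> snd s' (A + U) = min (min (snd s (B + U) + 1) K) (snd s (C + U)))
    \<and> (\<forall>a. \<not> (A + u \<le> a \<and> a < A + P) \<longrightarrow> snd s' a = snd s a)
    \<and> same_except (fst s) (fst s') {44, 46, 47, 48, 49}" for u s'
  have step: "runs combine_entry s1 12 (\<lambda>s'. I u s' \<and> fst s' 44 = u)" if I: "I (Suc u) s1" and counter: "fst s1 44 = Suc u" for u s1
  proof -
    have uP: "u < P" and regs: "same_except (fst s) (fst s1) {44, 46, 47, 48, 49}"
      using I unfolding I_def by simp_all
    have vals: "fst s1 1 = 1" "fst s1 21 = A" "fst s1 22 = B" "fst s1 23 = C" "fst s1 25 = K"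
      using regs assms unfolding same_except_def by simp_all
    have filled: "snd s1 (A + U) = min (min (snd s (B + U) + 1) K) (snd s (C + U))" if "Suc u \<le> U" "U < P" for U
      using I that unfolding I_def by simp
    have old: "snd s1 a = snd s a" if "\<not> (A + Suc u \<le> a \<and> a < A + P)" for a
      using I that unfolding I_def by simp
    let ?X = "min (min (snd s (B + u) + 1) K) (snd s (C + u))"
    have "runs combine_entry s1 12 (\<lambda>s'. fst s' 44 = u \<and> same_except (fst s1) (fst s') {44, 46, 47, 48, 49} \<and> snd s' = (snd s1)(A + u := ?X))"
      using vals counter old[of "B + u"] old[of "C + u"] assms
      unfolding combine_entry_def by (simp add: same_except_def diff_diff_eq_min del: diff_diff_left)
    then show ?thesis
    proof (rule runs_mono)
      fix s' assume s': "fst s' 44 = u \<and> same_except (fst s1) (fst s') {44, 46, 47, 48, 49}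
        \<and> snd s' = (snd s1)(A + u := ?X)"
      have entries: "\<forall>U. u \<le> U \<and> U < P \<longrightarrow> snd s' (A + U) = min (min (snd s (B + U) + 1) K) (snd s (C + U))"
      proof (intro allI impI)
        fix U assume U: "u \<le> U \<and> U < P"
        show "snd s' (A + U) = min (min (snd s (B + U) + 1) K) (snd s (C + U))"
        proof (cases "U = u")
          case True
          then show ?thesis using s' by simp
        next
          case False
          then have "Suc u \<le> U" using U by simp
          then show ?thesis using s' filled[of U] U by simp
        qed
      qed
      have frame: "\<forall>a. \<not> (A + u \<le> a \<and> a < A + P) \<longrightarrow> snd s' a = snd s a"
      proof (intro allI impI)
        fix a assume "\<not> (A + u \<le> a \<and> a < A + P)"
        then show "snd s' a = snd s a" using old[of a] s' uP by auto
      qed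
      have "same_except (fst s) (fst s') {44, 46, 47, 48, 49}"
        using regs s' unfolding same_except_def by auto
      then show "I u s' \<and> fst s' 44 = u"
        unfolding I_def using uP entries frame s' by (intro conjI) simp_all
    qed simp
  qed
  have init: "runs (Add 44 20 13) s 1 (\<lambda>s'. I P s' \<and> fst s' 44 = P)"
    using assms by (simp add: I_def same_except_def)
  have "runs combine_tables s (1 + (P + 1) * (12 + 1)) (I 0)"
    unfolding combine_tables_def by (rule runs_countdown_loop[OF init step])
  then show ?thesis by (rule runs_mono) (simp_all add: I_def)
qed

lemma pred_mod_eq: "0 < (d::nat) \<Longrightarrow> 0 < U \<Longrightarrow> (U - 1) mod d = (if U mod d = 0 then d - 1 else U mod d - 1)"
  by (cases U) (auto simp: mod_Suc)

text \<open>Register 45 keeps \<open>U mod (2 * 2 ^ i)\<close> for the current index \<open>U\<close> of the (downward) loop, so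
  that bit \<open>i\<close> of \<open>U\<close> can be read off by one comparison with \<open>2 ^ i\<close> in register 42.\<close>

definition take_min :: com where
  "take_min = Seq (Load 47 46) (Seq (Sub 48 46 42) (Seq (Load 48 48) (Seq (Sub 49 47 48)
     (Seq (Sub 47 47 49) (Store 46 47)))))"

definition push_bit_entry :: com where
  "push_bit_entry = Seq (Sub 44 44 1) (Seq (Add 46 40 44) (Seq (Sub 49 42 45)
     (Seq (If 49 (Store 46 25) take_min) (If 45 (Sub 45 45 1) (Sub 45 43 1)))))"

definition push_bit :: com where
  "push_bit = Seq (Seq (pow2_into 42 41 49) (Seq (Add 43 42 42) (Seq (Sub 45 43 1) (Add 44 20 13))))
     (While 44 push_bit_entry)"

lemma runs_push_bit_entry:
  assumes "fst s 44 = Suc U" "fst s 42 = h" "fst s 43 = w" "fst s 45 = r" "r \<le> U"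
    "fst s 40 = X" "fst s 25 = K" "fst s 1 = 1"
  shows "runs push_bit_entry s 13 (\<lambda>s'. fst s' 44 = U \<and> fst s' 45 = (if r = 0 then w - 1 else r - 1)
    \<and> same_except (fst s) (fst s') {44, 45, 46, 47, 48, 49}
    \<and> snd s' = (snd s)(X + U := if h \<le> r then min (snd s (X + U)) (snd s (X + (U - h))) else K))"
proof (cases "h \<le> r")
  case True
  then have "X + U - h = X + (U - h)" using assms(5) by simp
  then show ?thesis using assms True
    unfolding push_bit_entry_def take_min_def by (simp add: same_except_def diff_diff_eq_min)
next
  case False
  then show ?thesis using assms unfolding push_bit_entry_def by (simp add: same_except_def)
qed

lemma runs_push_bit:
  assumes "fst s 40 = X" "fst s 41 = i" "i < m" "fst s 20 = 2 ^ m" "fst s 25 = K" "fst s 13 = 0" "fst s 1 = 1"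
  defines "G \<equiv> \<lambda>U. if bit U i then min (snd s (X + U)) (snd s (X + (U - 2 ^ i))) else K"
  shows "runs push_bit s (3 * i + 14 * 2 ^ m + 25)
    (\<lambda>s'. (\<forall>U<2 ^ m. snd s' (X + U) = G U) \<and> (\<forall>a. \<not> (X \<le> a \<and> a < X + 2 ^ m) \<longrightarrow> snd s' a = snd s a)
      \<and> same_except (fst s) (fst s') {42, 43, 44, 45, 46, 47, 48, 49})"
proof -
  let ?P = "2 ^ m :: nat"
  define I where "I u s' \<longleftrightarrow> u \<le> ?P \<and> fst s' 42 = 2 ^ i \<and> fst s' 43 = 2 * 2 ^ i
    \<and> (0 < u \<longrightarrow> fst s' 45 = (u - 1) mod (2 * 2 ^ i))
    \<and> (\<forall>U<u. snd s' (X + U) = snd s (X + U)) \<and> (\<forall>U. u \<le> U \<and> U < ?P \<longrightarrow> snd s' (X + U) = G U)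
    \<and> (\<forall>a. \<not> (X \<le> a \<and> a < X + ?P) \<longrightarrow> snd s' a = snd s a)
    \<and> same_except (fst s) (fst s') {42, 43, 44, 45, 46, 47, 48, 49}" for u and s' :: state
  have step: "runs push_bit_entry s1 13 (\<lambda>s'. I u s' \<and> fst s' 44 = u)"
    if I: "I (Suc u) s1" and counter: "fst s1 44 = Suc u" for u s1
  proof -
    have uP: "u < ?P" and regs: "same_except (fst s) (fst s1) {42, 43, 44, 45, 46, 47, 48, 49}"
      and pow: "fst s1 42 = 2 ^ i" "fst s1 43 = 2 * 2 ^ i" and res: "fst s1 45 = u mod (2 * 2 ^ i)"
      using I unfolding I_def by simp_all
    have vals: "fst s1 40 = X" "fst s1 25 = K" "fst s1 1 = 1"
      using regs assms unfolding same_except_def by simp_all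
    have below: "snd s1 (X + U) = snd s (X + U)" if "U < Suc u" for U
      using I that unfolding I_def by simp
    have outside: "snd s1 a = snd s a" if "\<not> (X \<le> a \<and> a < X + ?P)" for a
      using I that unfolding I_def by simp
    let ?r = "u mod (2 * 2 ^ i)"
    have G: "(if 2 ^ i \<le> ?r then min (snd s1 (X + u)) (snd s1 (X + (u - 2 ^ i))) else K) = G u"
      unfolding G_def bit_iff_power_le_mod using below by simp
    have residue: "(if ?r = 0 then 2 * 2 ^ i - 1 else ?r - 1) = (u - 1) mod (2 * 2 ^ i)" if "0 < u"
      using pred_mod_eq[of "2 * 2 ^ i" u] that by simp
    have "runs push_bit_entry s1 13 (\<lambda>s'. fst s' 44 = u \<and> fst s' 45 = (if ?r = 0 then 2 * 2 ^ i - 1 else ?r - 1)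
        \<and> same_except (fst s1) (fst s') {44, 45, 46, 47, 48, 49}
        \<and> snd s' = (snd s1)(X + u := if 2 ^ i \<le> ?r then min (snd s1 (X + u)) (snd s1 (X + (u - 2 ^ i))) else K))"
      by (rule runs_push_bit_entry[OF counter pow res _ vals]) simp
    then have body: "runs push_bit_entry s1 13 (\<lambda>s'. fst s' 44 = u \<and> (0 < u \<longrightarrow> fst s' 45 = (u - 1) mod (2 * 2 ^ i))
        \<and> same_except (fst s1) (fst s') {44, 45, 46, 47, 48, 49} \<and> snd s' = (snd s1)(X + u := G u))"
      by (rule runs_mono) (use G residue in auto)
    show ?thesis
    proof (rule runs_mono[OF body])
      fix s' assume s': "fst s' 44 = u \<and> (0 < u \<longrightarrow> fst s' 45 = (u - 1) mod (2 * 2 ^ i))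
        \<and> same_except (fst s1) (fst s') {44, 45, 46, 47, 48, 49} \<and> snd s' = (snd s1)(X + u := G u)"
      have above: "\<forall>U. u \<le> U \<and> U < ?P \<longrightarrow> snd s' (X + U) = G U"
      proof (intro allI impI)
        fix U assume U: "u \<le> U \<and> U < ?P"
        show "snd s' (X + U) = G U"
        proof (cases "U = u")
          case False
          then have "Suc u \<le> U" using U by simp
          then show ?thesis using I s' U unfolding I_def by simp
        qed (use s' in simp)
      qed
      have frame: "\<forall>a. \<not> (X \<le> a \<and> a < X + ?P) \<longrightarrow> snd s' a = snd s a"
      proof (intro allI impI)
        fix a assume "\<not> (X \<le> a \<and> a < X + ?P)"
        then show "snd s' a = snd s a" using outside[of a] s' uP by auto
      qed
      have "same_except (fst s) (fst s') {42, 43, 44, 45, 46, 47, 48, 49}"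
        using regs s' unfolding same_except_def by auto
      moreover have "\<forall>U<u. snd s' (X + U) = snd s (X + U)" using below s' by simp
      ultimately show "I u s' \<and> fst s' 44 = u"
        unfolding I_def using uP pow above frame s' regs unfolding same_except_def by (intro conjI) simp_all
    qed simp
  qed
  have dvd: "2 * 2 ^ i dvd ?P" using assms(3) le_imp_power_dvd[of "Suc i" m "2::nat"] by simp
  then have "(?P - 1) mod (2 * 2 ^ i) = 2 * 2 ^ i - 1"
    using pred_mod_eq[of "2 * 2 ^ i" ?P] by simp
  then have rest: "runs (Seq (Add 43 42 42) (Seq (Sub 45 43 1) (Add 44 20 13))) s' 3
      (\<lambda>s''. I ?P s'' \<and> fst s'' 44 = ?P)"
    if "fst s' 42 = 2 ^ i \<and> same_except (fst s) (fst s') {42, 49} \<and> snd s' = snd s" for s'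
    using that assms unfolding I_def same_except_def by simp
  have init: "runs (Seq (pow2_into 42 41 49) (Seq (Add 43 42 42) (Seq (Sub 45 43 1) (Add 44 20 13))))
      s (3 * i + 5 + 3) (\<lambda>s'. I ?P s' \<and> fst s' 44 = ?P)"
    by (rule runs_Seq[OF runs_pow2_into rest]) (use assms in simp_all)
  have "runs push_bit s (3 * i + 5 + 3 + (?P + 1) * (13 + 1)) (I 0)"
    unfolding push_bit_def by (rule runs_countdown_loop[OF init step])
  then show ?thesis by (rule runs_mono) (simp_all add: I_def)
qed

definition if_eq :: "nat \<Rightarrow> nat \<Rightarrow> com \<Rightarrow> com" where
  "if_eq a b c = Seq (Sub 37 a b) (Seq (Sub 38 b a) (If 37 (Seq Skip Skip) (If 38 Skip c)))"

lemma wp_if_eq [simp]: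
  assumes "a \<notin> {37, 38}" "b \<notin> {37, 38}"
  shows "wp (if_eq a b c) Q s = (if fst s a = fst s b
    then wp c (\<lambda>t. Q (t + 4)) ((fst s)(37 := 0, 38 := 0), snd s)
    else Q 5 ((fst s)(37 := fst s a - fst s b, 38 := fst s b - fst s a), snd s))"
proof -
  have steps: "Suc (Suc (Suc (Suc t))) = t + 4" "Suc (Suc (Suc (Suc (Suc 0)))) = 5" for t :: nat
    by simp_all
  show ?thesis using assms unfolding if_eq_def by (simp add: ac_simps steps)
qed

text \<open>The cardinality table is filled upwards with \<open>|U| = |U - h| + 1\<close>, where \<open>h\<close>, the largest
  power of two not above \<open>U\<close>, is kept in register 42.\<close>

definition popcount_entry :: com where
  "popcount_entry = Seq (Add 49 42 42) (Seq (if_eq 44 49 (Add 42 42 42)) (Seq (Sub 46 44 42)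
    (Seq (Add 46 24 46) (Seq (Load 47 46) (Seq (Add 47 47 1) (Seq (Add 46 24 44) (Seq (Store 46 47)
    (Seq (Add 44 44 1) (Sub 45 45 1)))))))))"

definition popcount_table :: com where
  "popcount_table = Seq (Seq (Store 24 13) (Seq (Const 42 1) (Seq (Const 44 1) (Sub 45 20 1))))
     (While 45 popcount_entry)"

lemma runs_popcount_entry:
  assumes "fst s 44 = U" "fst s 42 = h" "fst s 24 = C" "fst s 1 = 1"
  defines "h' \<equiv> if U = h + h then h + h else h"
  shows "runs popcount_entry s 15 (\<lambda>s'. fst s' 44 = U + 1 \<and> fst s' 45 = fst s 45 - 1 \<and> fst s' 42 = h'
    \<and> same_except (fst s) (fst s') {37, 38, 42, 44, 45, 46, 47, 49}
    \<and> snd s' = (snd s)(C + U := snd s (C + (U - h')) + 1))"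
  using assms unfolding popcount_entry_def by (simp add: same_except_def)

lemma runs_popcount_table:
  assumes "fst s 20 = P" "0 < P" "fst s 24 = C" "fst s 13 = 0" "fst s 1 = 1"
  shows "runs popcount_table s (16 * P + 10) (\<lambda>s'. (\<forall>U<P. snd s' (C + U) = card (bitset U))
    \<and> (\<forall>a. \<not> (C \<le> a \<and> a < C + P) \<longrightarrow> snd s' a = snd s a)
    \<and> same_except (fst s) (fst s') {37, 38, 42, 44, 45, 46, 47, 49})"
proof -
  define I where "I u s' \<longleftrightarrow> u < P \<and> fst s' 44 = P - u
    \<and> (\<exists>j. fst s' 42 = 2 ^ j \<and> 2 ^ j \<le> P - u \<and> P - u \<le> 2 * 2 ^ j)
    \<and> (\<forall>V < P - u. snd s' (C + V) = card (bitset V))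
    \<and> (\<forall>a. \<not> (C \<le> a \<and> a < C + (P - u)) \<longrightarrow> snd s' a = snd s a)
    \<and> same_except (fst s) (fst s') {37, 38, 42, 44, 45, 46, 47, 49}" for u and s' :: state
  have step: "runs popcount_entry s1 15 (\<lambda>s'. I u s' \<and> fst s' 45 = u)"
    if I: "I (Suc u) s1" and counter: "fst s1 45 = Suc u" for u s1
  proof -
    let ?U = "P - Suc u"
    have uP: "Suc u < P" and U: "fst s1 44 = ?U" and regs: "same_except (fst s) (fst s1) {37, 38, 42, 44, 45, 46, 47, 49}"
      using I unfolding I_def by simp_all
    obtain j where j: "fst s1 42 = 2 ^ j" "2 ^ j \<le> ?U" "?U \<le> 2 * 2 ^ j"
      using I unfolding I_def by blast
    have known: "snd s1 (C + V) = card (bitset V)" if "V < ?U" for V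
      using I that unfolding I_def by simp
    have outside: "snd s1 a = snd s a" if "\<not> (C \<le> a \<and> a < C + ?U)" for a
      using I that unfolding I_def by simp
    have vals: "fst s1 24 = C" "fst s1 1 = 1" using regs assms unfolding same_except_def by simp_all
    let ?h = "if ?U = 2 ^ j + 2 ^ j then 2 ^ j + 2 ^ j else (2::nat) ^ j"
    obtain j' where j': "?h = 2 ^ j'" "?h \<le> ?U" "?U < 2 * ?h"
    proof (cases "?U = 2 ^ j + 2 ^ j")
      case True
      then show ?thesis using j by (intro that[of "Suc j"]) auto
    next
      case False
      then show ?thesis using j by (intro that[of j]) auto
    qed
    have "card (bitset ?U) = Suc (card (bitset (?U - ?h)))"
      using card_bitset_add_power[of "?U - ?h" j'] j' by simp
    moreover have "?U - ?h < ?U" using j' by (simp add: diff_less)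
    ultimately have card: "snd s1 (C + (?U - ?h)) + 1 = card (bitset ?U)" using known by simp
    show ?thesis
    proof (rule runs_mono[OF runs_popcount_entry[OF U j(1) vals]])
      fix s' assume s': "fst s' 44 = ?U + 1 \<and> fst s' 45 = fst s1 45 - 1 \<and> fst s' 42 = ?h
        \<and> same_except (fst s1) (fst s') {37, 38, 42, 44, 45, 46, 47, 49}
        \<and> snd s' = (snd s1)(C + ?U := snd s1 (C + (?U - ?h)) + 1)"
      have mem: "snd s' = (snd s1)(C + ?U := card (bitset ?U))" using s' card by simp
      have "\<forall>V < P - u. snd s' (C + V) = card (bitset V)"
      proof (intro allI impI)
        fix V assume "V < P - u"
        then consider "V < ?U" | "V = ?U" using uP by linarith
        then show "snd s' (C + V) = card (bitset V)" using known mem by cases auto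
      qed
      moreover have "\<forall>a. \<not> (C \<le> a \<and> a < C + (P - u)) \<longrightarrow> snd s' a = snd s a"
      proof (intro allI impI)
        fix a assume "\<not> (C \<le> a \<and> a < C + (P - u))"
        then have "a \<noteq> C + ?U" "\<not> (C \<le> a \<and> a < C + ?U)" using uP by linarith+
        then show "snd s' a = snd s a" using outside mem by simp
      qed
      moreover have "\<exists>j. fst s' 42 = 2 ^ j \<and> 2 ^ j \<le> P - u \<and> P - u \<le> 2 * 2 ^ j"
        using s' j' uP by (intro exI[of _ j']) auto
      moreover have "same_except (fst s) (fst s') {37, 38, 42, 44, 45, 46, 47, 49}"
        using regs s' unfolding same_except_def by auto
      ultimately show "I u s' \<and> fst s' 45 = u"
        unfolding I_def using s' uP counter by (intro conjI) simp_all
    qed simp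
  qed
  have init: "runs (Seq (Store 24 13) (Seq (Const 42 1) (Seq (Const 44 1) (Sub 45 20 1)))) s 4
      (\<lambda>s'. I (P - 1) s' \<and> fst s' 45 = P - 1)"
    using assms unfolding I_def same_except_def by (auto intro: exI[of _ 0])
  have "runs popcount_table s (4 + (P - 1 + 1) * (15 + 1)) (I 0)"
    unfolding popcount_table_def by (rule runs_countdown_loop[OF init step])
  then show ?thesis by (rule runs_mono) (use assms in \<open>simp_all add: I_def\<close>)
qed

definition scan_entry :: com where
  "scan_entry = Seq (Sub 44 44 1) (Seq (Add 46 24 44) (Seq (Load 47 46) (Seq (Sub 48 3 47)
     (Seq (Add 46 21 44) (Seq (Load 47 46) (Seq (Sub 49 47 2) (If 48 Skip (If 49 Skip (Const 0 1)))))))))"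

definition final_scan :: com where
  "final_scan = Seq (Seq (Const 0 0) (Add 44 20 13)) (While 44 scan_entry)"

lemma runs_final_scan:
  assumes "fst s 20 = P" "fst s 21 = A" "fst s 24 = C" "fst s 2 = k" "fst s 3 = p" "fst s 13 = 0" "fst s 1 = 1"
  shows "runs final_scan s (12 * P + 15)
    (\<lambda>s'. fst s' 0 \<noteq> 0 \<longleftrightarrow> (\<exists>U<P. p \<le> snd s (C + U) \<and> snd s (A + U) \<le> k))"
proof -
  define good where "good U \<longleftrightarrow> p \<le> snd s (C + U) \<and> snd s (A + U) \<le> k" for U
  define I where "I u s' \<longleftrightarrow> u \<le> P \<and> (fst s' 0 \<noteq> 0 \<longleftrightarrow> (\<exists>U. u \<le> U \<and> U < P \<and> good U))
    \<and> same_except (fst s) (fst s') {0, 44, 46, 47, 48, 49} \<and> snd s' = snd s" for u and s' :: state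
  have step: "runs scan_entry s1 11 (\<lambda>s'. I u s' \<and> fst s' 44 = u)"
    if I: "I (Suc u) s1" and counter: "fst s1 44 = Suc u" for u s1
  proof -
    have uP: "u < P" and flag: "fst s1 0 \<noteq> 0 \<longleftrightarrow> (\<exists>U. Suc u \<le> U \<and> U < P \<and> good U)"
      and regs: "same_except (fst s) (fst s1) {0, 44, 46, 47, 48, 49}" and mem: "snd s1 = snd s"
      using I unfolding I_def by simp_all
    have vals: "fst s1 24 = C" "fst s1 21 = A" "fst s1 2 = k" "fst s1 3 = p" "fst s1 1 = 1"
      using regs assms unfolding same_except_def by simp_all
    have split: "(\<exists>U. u \<le> U \<and> U < P \<and> good U) \<longleftrightarrow> good u \<or> (\<exists>U. Suc u \<le> U \<and> U < P \<and> good U)"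
    proof
      assume "\<exists>U. u \<le> U \<and> U < P \<and> good U"
      then obtain U where "u \<le> U" "U < P" "good U" by blast
      then show "good u \<or> (\<exists>U. Suc u \<le> U \<and> U < P \<and> good U)" by (cases "U = u") auto
    next
      assume "good u \<or> (\<exists>U. Suc u \<le> U \<and> U < P \<and> good U)"
      then show "\<exists>U. u \<le> U \<and> U < P \<and> good U" using uP Suc_leD by blast
    qed
    show ?thesis
      using uP flag regs mem vals counter split unfolding scan_entry_def I_def good_def same_except_def
      by auto
  qed
  have init: "runs (Seq (Const 0 0) (Add 44 20 13)) s 2 (\<lambda>s'. I P s' \<and> fst s' 44 = P)"
    using assms unfolding I_def same_except_def by auto
  have "runs final_scan s (2 + (P + 1) * (11 + 1)) (I 0)"
    unfolding final_scan_def by (rule runs_countdown_loop[OF init step])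
  then show ?thesis by (rule runs_mono) (auto simp: I_def good_def)
qed

section \<open>The loop over the variables\<close>

definition dp_base :: "cnf \<Rightarrow> nat \<Rightarrow> nat" where
  "dp_base phi N = N + 3 * length (occurrences phi)"

definition layout :: "cnf \<Rightarrow> nat \<Rightarrow> nat \<Rightarrow> nat \<Rightarrow> state \<Rightarrow> bool" where
  "layout phi N k p s \<longleftrightarrow> fst s 1 = 1 \<and> fst s 13 = 0 \<and> fst s 2 = k \<and> fst s 3 = p
    \<and> fst s 4 = length phi \<and> fst s 8 = length (occurrences phi) \<and> fst s 10 = N
    \<and> fst s 20 = 2 ^ length phi \<and> fst s 21 = dp_base phi N \<and> fst s 22 = dp_base phi N + 2 ^ length phi
    \<and> fst s 23 = dp_base phi N + 2 * 2 ^ length phi \<and> fst s 24 = dp_base phi N + 3 * 2 ^ length phi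
    \<and> fst s 25 = Suc k \<and> stores_occs phi N (length (occurrences phi)) (snd s)"

lemma layout_preserved:
  assumes "layout phi N k p s" "same_except (fst s) (fst s') S"
    "S \<inter> {1, 2, 3, 4, 8, 10, 13, 20, 21, 22, 23, 24, 25} = {}" "\<forall>a<dp_base phi N. snd s' a = snd s a"
  shows "layout phi N k p s'"
proof -
  have "fst s' r = fst s r" if "r \<in> {1, 2, 3, 4, 8, 10, 13, 20, 21, 22, 23, 24, 25}" for r
    using assms(2,3) that unfolding same_except_def by blast
  moreover have "stores_occs phi N (length (occurrences phi)) (snd s')"
    using assms(1,4) unfolding layout_def stores_occs_def dp_base_def by simp
  ultimately show ?thesis using assms(1) unfolding layout_def by simp
qed

definition vars_upto :: "cnf \<Rightarrow> nat \<Rightarrow> nat set" where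
  "vars_upto phi j = (\<lambda>j'. fst (snd (occurrences phi ! j'))) ` {..<j}"

definition clauses_with_upto :: "cnf \<Rightarrow> bool \<Rightarrow> nat \<Rightarrow> nat \<Rightarrow> nat set" where
  "clauses_with_upto phi b v j = {i. \<exists>j'<j. occurrences phi ! j' = (b, v, i)}"

lemma vars_upto_Suc: "vars_upto phi (Suc j) = insert (fst (snd (occurrences phi ! j))) (vars_upto phi j)"
  unfolding vars_upto_def by (auto simp: lessThan_Suc)

lemma vars_upto_length: "vars_upto phi (length (occurrences phi)) = vars_of phi"
proof (intro set_eqI iffI)
  fix x assume "x \<in> vars_upto phi (length (occurrences phi))"
  then obtain j where "j < length (occurrences phi)" "x = fst (snd (occurrences phi ! j))"
    unfolding vars_upto_def by auto
  moreover obtain b v i where "occurrences phi ! j = (b, v, i)" by (cases "occurrences phi ! j") auto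
  ultimately show "x \<in> vars_of phi" unfolding vars_of_def using nth_mem[of j "occurrences phi"] by force
next
  fix x assume "x \<in> vars_of phi"
  then obtain b i where "(b, x, i) \<in> set (occurrences phi)" unfolding vars_of_def by blast
  then obtain j where "j < length (occurrences phi)" "occurrences phi ! j = (b, x, i)"
    by (metis in_set_conv_nth)
  then show "x \<in> vars_upto phi (length (occurrences phi))"
    unfolding vars_upto_def by (intro image_eqI[of _ _ j]) auto
qed

lemma clauses_with_upto_Suc: "clauses_with_upto phi b v (Suc j) =
    (if fst (occurrences phi ! j) = b \<and> fst (snd (occurrences phi ! j)) = v
     then insert (snd (snd (occurrences phi ! j))) (clauses_with_upto phi b v j) else clauses_with_upto phi b v j)"
  unfolding clauses_with_upto_def by (cases "occurrences phi ! j") (auto simp: less_Suc_eq)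

lemma occurrence_clause_less: "j < length (occurrences phi) \<Longrightarrow> snd (snd (occurrences phi ! j)) < length phi"
  using set_occurrences[of "fst (occurrences phi ! j)" "fst (snd (occurrences phi ! j))"
      "snd (snd (occurrences phi ! j))" phi] nth_mem[of j "occurrences phi"] by simp

lemma clauses_with_upto_subset: "j \<le> length (occurrences phi) \<Longrightarrow> clauses_with_upto phi b v j \<subseteq> {..<length phi}"
proof
  fix i assume j: "j \<le> length (occurrences phi)" and "i \<in> clauses_with_upto phi b v j"
  then obtain j' where "j' < j" "occurrences phi ! j' = (b, v, i)" unfolding clauses_with_upto_def by blast
  then show "i \<in> {..<length phi}" using occurrence_clause_less[of j' phi] j by simp
qed

lemma clauses_with_upto_length: "clauses_with_upto phi b v (length (occurrences phi)) = clauses_with phi b v"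
  unfolding clauses_with_upto_def clauses_with_def
  by (auto simp: in_set_conv_nth[symmetric] set_occurrences)

text \<open>In the loop over the occurrences, register 30 points to the current occurrence, register 31
  counts the occurrences still to visit, register 39 holds the index \<open>j\<close> of the current
  occurrence and register 32 its variable. A variable is processed at its first occurrence only;
  register 33 records whether it was seen before.\<close>

definition seen_entry :: com where
  "seen_entry = Seq (Seq (Add 9 34 1) (Load 36 9)) (Seq (if_eq 36 32 (Const 33 1))
     (Seq (Add 34 34 1) (Seq (Add 34 34 1) (Seq (Add 34 34 1) (Sub 35 35 1)))))"

definition seen_before :: com where
  "seen_before = Seq (Seq (Const 33 0) (Seq (Add 34 10 13) (Add 35 39 13))) (While 35 seen_entry)"

lemma stores_occsD:
  assumes "stores_occs phi N L M" "j < L"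
  shows "M (N + 3 * j) = of_bool (fst (occurrences phi ! j))"
    and "M (N + 3 * j + 1) = fst (snd (occurrences phi ! j))"
    and "M (N + 3 * j + 2) = snd (snd (occurrences phi ! j))"
  using assms unfolding stores_occs_def by blast+

lemma runs_seen_before:
  assumes "layout phi N k p s" "fst s 39 = j" "j \<le> length (occurrences phi)" "fst s 32 = v"
  shows "runs seen_before s (12 * j + 15) (\<lambda>s'. (fst s' 33 \<noteq> 0 \<longleftrightarrow> v \<in> vars_upto phi j)
    \<and> same_except (fst s) (fst s') {9, 33, 34, 35, 36, 37, 38} \<and> snd s' = snd s)"
proof -
  have vals: "fst s 1 = 1" "fst s 13 = 0" "fst s 10 = N"
    and occs: "stores_occs phi N (length (occurrences phi)) (snd s)"
    using assms(1) unfolding layout_def by simp_all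
  define I where "I u s' \<longleftrightarrow> u \<le> j \<and> fst s' 34 = N + 3 * (j - u)
    \<and> (fst s' 33 \<noteq> 0 \<longleftrightarrow> v \<in> vars_upto phi (j - u))
    \<and> same_except (fst s) (fst s') {9, 33, 34, 35, 36, 37, 38} \<and> snd s' = snd s" for u and s' :: state
  have step: "runs seen_entry s1 11 (\<lambda>s'. I u s' \<and> fst s' 35 = u)"
    if I: "I (Suc u) s1" and counter: "fst s1 35 = Suc u" for u s1
  proof -
    let ?j = "j - Suc u"
    have j: "?j < length (occurrences phi)" "j - u = Suc ?j" using I assms(3) unfolding I_def by auto
    have pos: "fst s1 34 = N + 3 * ?j" and flag: "fst s1 33 \<noteq> 0 \<longleftrightarrow> v \<in> vars_upto phi ?j"
      and regs: "same_except (fst s) (fst s1) {9, 33, 34, 35, 36, 37, 38}" and mem: "snd s1 = snd s"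
      using I unfolding I_def by simp_all
    have "fst s1 1 = 1" "fst s1 32 = v" using regs vals assms(4) unfolding same_except_def by simp_all
    moreover have "snd s1 (fst s1 34 + 1) = fst (snd (occurrences phi ! ?j))"
      using stores_occsD(2)[OF occs j(1)] pos mem by simp
    ultimately show ?thesis using pos flag regs mem counter j(2)
      unfolding seen_entry_def I_def by (auto simp: same_except_def vars_upto_Suc)
  qed
  have init: "runs (Seq (Const 33 0) (Seq (Add 34 10 13) (Add 35 39 13))) s 3 (\<lambda>s'. I j s' \<and> fst s' 35 = j)"
    using vals assms(2) unfolding I_def same_except_def vars_upto_def by simp
  have "runs seen_before s (3 + (j + 1) * (11 + 1)) (I 0)"
    unfolding seen_before_def by (rule runs_countdown_loop[OF init step])
  then show ?thesis by (rule runs_mono) (simp_all add: I_def)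
qed

definition select_table :: com where
  "select_table = Seq (Add 9 34 1) (Seq (Add 9 9 1) (Seq (Load 41 9) (Seq (Load 36 34)
     (If 36 (Add 40 22 13) (Add 40 23 13)))))"

definition force_occurrence :: com where
  "force_occurrence = Seq select_table push_bit"

lemma runs_force_occurrence:
  assumes "snd s (fst s 34) = of_bool b" "snd s (fst s 34 + 2) = i" "i < m" "fst s 20 = 2 ^ m"
    "fst s 22 = B" "fst s 23 = C" "fst s 25 = K" "fst s 13 = 0" "fst s 1 = 1"
  defines "X \<equiv> if b then B else C"
  shows "runs force_occurrence s (3 * m + 14 * 2 ^ m + 31)
    (\<lambda>s'. (\<forall>U<2 ^ m. snd s' (X + U) = (if bit U i then min (snd s (X + U)) (snd s (X + (U - 2 ^ i))) else K))
      \<and> (\<forall>a. \<not> (X \<le> a \<and> a < X + 2 ^ m) \<longrightarrow> snd s' a = snd s a)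
      \<and> same_except (fst s) (fst s') {9, 36, 40, 41, 42, 43, 44, 45, 46, 47, 48, 49})"
proof -
  have select: "runs select_table s 6 (\<lambda>s'. fst s' 40 = X \<and> fst s' 41 = i
      \<and> same_except (fst s) (fst s') {9, 36, 40, 41} \<and> snd s' = snd s)"
    using assms unfolding select_table_def by (cases b) (simp_all add: same_except_def add.assoc)
  have "runs force_occurrence s (6 + (3 * i + 14 * 2 ^ m + 25))
    (\<lambda>s'. (\<forall>U<2 ^ m. snd s' (X + U) = (if bit U i then min (snd s (X + U)) (snd s (X + (U - 2 ^ i))) else K))
      \<and> (\<forall>a. \<not> (X \<le> a \<and> a < X + 2 ^ m) \<longrightarrow> snd s' a = snd s a)
      \<and> same_except (fst s) (fst s') {9, 36, 40, 41, 42, 43, 44, 45, 46, 47, 48, 49})"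
    unfolding force_occurrence_def
  proof (rule runs_Seq[OF select])
    fix s1 assume s1: "fst s1 40 = X \<and> fst s1 41 = i \<and> same_except (fst s) (fst s1) {9, 36, 40, 41}
      \<and> snd s1 = snd s"
    then have "fst s1 20 = 2 ^ m" "fst s1 25 = K" "fst s1 13 = 0" "fst s1 1 = 1"
      using assms unfolding same_except_def by simp_all
    with s1 assms(3) show "runs push_bit s1 (3 * i + 14 * 2 ^ m + 25)
      (\<lambda>s'. (\<forall>U<2 ^ m. snd s' (X + U) = (if bit U i then min (snd s (X + U)) (snd s (X + (U - 2 ^ i))) else K))
        \<and> (\<forall>a. \<not> (X \<le> a \<and> a < X + 2 ^ m) \<longrightarrow> snd s' a = snd s a)
        \<and> same_except (fst s) (fst s') {9, 36, 40, 41, 42, 43, 44, 45, 46, 47, 48, 49})"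
      by (intro runs_mono[OF runs_push_bit[of s1 X i m K]]) (auto simp: same_except_def)
  qed
  then show ?thesis by (rule runs_mono) (use assms(3) in simp_all)
qed

definition force_entry :: com where
  "force_entry = Seq (Seq (Add 9 34 1) (Load 36 9)) (Seq (if_eq 36 32 force_occurrence)
     (Seq (Add 34 34 1) (Seq (Add 34 34 1) (Seq (Add 34 34 1) (Sub 35 35 1)))))"

definition force_occurrences :: com where
  "force_occurrences = Seq (Seq (Add 34 10 13) (Add 35 8 13)) (While 35 force_entry)"

lemma runs_force_entry:
  assumes "snd s (fst s 34) = of_bool b" "snd s (fst s 34 + 1) = w" "snd s (fst s 34 + 2) = i" "i < m"
    "fst s 20 = 2 ^ m" "fst s 22 = B" "fst s 23 = C" "fst s 25 = K" "fst s 32 = v" "fst s 13 = 0" "fst s 1 = 1"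
  defines "X \<equiv> if b then B else C"
  shows "runs force_entry s (3 * m + 14 * 2 ^ m + 46) (\<lambda>s'. fst s' 34 = fst s 34 + 3 \<and> fst s' 35 = fst s 35 - 1
    \<and> same_except (fst s) (fst s') {9, 34, 35, 36, 37, 38, 40, 41, 42, 43, 44, 45, 46, 47, 48, 49}
    \<and> (if w = v
       then (\<forall>U<2 ^ m. snd s' (X + U) = (if bit U i then min (snd s (X + U)) (snd s (X + (U - 2 ^ i))) else K))
         \<and> (\<forall>a. \<not> (X \<le> a \<and> a < X + 2 ^ m) \<longrightarrow> snd s' a = snd s a)
       else snd s' = snd s))"
proof -
  let ?S = "{9, 34, 35, 36, 37, 38, 40, 41, 42, 43, 44, 45, 46, 47, 48, 49} :: nat set"
  let ?pushed = "\<lambda>M. (\<forall>U<2 ^ m. M (X + U) = (if bit U i then min (snd s (X + U)) (snd s (X + (U - 2 ^ i))) else K))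
    \<and> (\<forall>a. \<not> (X \<le> a \<and> a < X + 2 ^ m) \<longrightarrow> M a = snd s a)"
  define s1 where "s1 = ((fst s)(9 := fst s 34 + 1, 36 := w), snd s)"
  have read: "runs (Seq (Add 9 34 1) (Load 36 9)) s 2 (\<lambda>s'. s' = s1)"
    using assms(2,11) unfolding s1_def by simp
  have test: "runs (if_eq 36 32 force_occurrence) s1 (3 * m + 14 * 2 ^ m + 36)
    (\<lambda>s'. same_except (fst s1) (fst s') {37, 38, 9, 36, 40, 41, 42, 43, 44, 45, 46, 47, 48, 49}
      \<and> (if w = v then ?pushed (snd s') else snd s' = snd s))"
  proof (cases "w = v")
    case True
    let ?s2 = "((fst s1)(37 := 0, 38 := 0), snd s1)"
    have "runs force_occurrence ?s2 (3 * m + 14 * 2 ^ m + 31)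
      (\<lambda>s'. (\<forall>U<2 ^ m. snd s' (X + U) = (if bit U i then min (snd ?s2 (X + U)) (snd ?s2 (X + (U - 2 ^ i))) else K))
        \<and> (\<forall>a. \<not> (X \<le> a \<and> a < X + 2 ^ m) \<longrightarrow> snd s' a = snd ?s2 a)
        \<and> same_except (fst ?s2) (fst s') {9, 36, 40, 41, 42, 43, 44, 45, 46, 47, 48, 49})"
      by (rule runs_force_occurrence[of ?s2 b i m B C K, folded X_def])
        (use assms in \<open>simp_all add: s1_def add.assoc\<close>)
    then show ?thesis using True assms(9) unfolding s1_def by (auto simp: same_except_def elim!: wp_mono)
  next
    case False
    then show ?thesis using assms(9) unfolding s1_def by (simp add: same_except_def)
  qed
  have advance: "runs (Seq (Add 34 34 1) (Seq (Add 34 34 1) (Seq (Add 34 34 1) (Sub 35 35 1)))) s2 4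
    (\<lambda>s'. fst s' 34 = fst s 34 + 3 \<and> fst s' 35 = fst s 35 - 1 \<and> same_except (fst s) (fst s') ?S
      \<and> (if w = v then ?pushed (snd s') else snd s' = snd s))"
    if "same_except (fst s1) (fst s2) {37, 38, 9, 36, 40, 41, 42, 43, 44, 45, 46, 47, 48, 49}
      \<and> (if w = v then ?pushed (snd s2) else snd s2 = snd s)" for s2
    using that assms(11) unfolding s1_def same_except_def by (simp add: fun_upd_twist)
  have "runs force_entry s (2 + (3 * m + 14 * 2 ^ m + 36 + 4)) (\<lambda>s'. fst s' 34 = fst s 34 + 3
    \<and> fst s' 35 = fst s 35 - 1 \<and> same_except (fst s) (fst s') ?S \<and> (if w = v then ?pushed (snd s') else snd s' = snd s))"
    unfolding force_entry_def by (rule runs_Seq[OF read]) (use runs_Seq[OF test advance] in blast)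
  then show ?thesis by (rule runs_mono) simp_all
qed

lemma forced_tables_Suc:
  assumes occ: "occurrences phi ! j = (b, w, i)" "j < length (occurrences phi)"
    and BC: "B + 2 ^ length phi \<le> C"
    and FB: "forced_table (length phi) k F (clauses_with_upto phi True v j) (\<lambda>U. M (B + U))"
    and FC: "forced_table (length phi) k F (clauses_with_upto phi False v j) (\<lambda>U. M (C + U))"
    and X: "X = (if b then B else C)"
    and M': "if w = v
      then (\<forall>U<2 ^ length phi. M' (X + U) = (if bit U i then min (M (X + U)) (M (X + (U - 2 ^ i))) else Suc k))
        \<and> (\<forall>a. \<not> (X \<le> a \<and> a < X + 2 ^ length phi) \<longrightarrow> M' a = M a)
      else M' = M"
  shows "forced_table (length phi) k F (clauses_with_upto phi True v (Suc j)) (\<lambda>U. M' (B + U))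
    \<and> forced_table (length phi) k F (clauses_with_upto phi False v (Suc j)) (\<lambda>U. M' (C + U))
    \<and> (\<forall>a. \<not> (B \<le> a \<and> a < B + 2 ^ length phi) \<and> \<not> (C \<le> a \<and> a < C + 2 ^ length phi) \<longrightarrow> M' a = M a)"
proof -
  let ?m = "length phi"
  have i: "i < ?m" using occurrence_clause_less[OF occ(2)] occ(1) by simp
  have sub: "clauses_with_upto phi b' v j \<subseteq> {..<?m}" for b'
    using clauses_with_upto_subset[of j phi] occ(2) by simp
  have cw: "clauses_with_upto phi b' v (Suc j) =
      (if b' = b \<and> w = v then insert i (clauses_with_upto phi b' v j) else clauses_with_upto phi b' v j)" for b'
    unfolding clauses_with_upto_Suc occ(1) by auto
  show ?thesis
  proof (cases "w = v")
    case True
    show ?thesis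
    proof (cases b)
      case b: True
      have "\<forall>U<2 ^ ?m. M' (B + U) = (if bit U i then min (M (B + U)) (M (B + (U - 2 ^ i))) else Suc k)"
        using M' X True b by simp
      then have "forced_table ?m k F (insert i (clauses_with_upto phi True v j)) (\<lambda>U. M' (B + U))"
        by (rule forced_table_cong[OF forced_table_insert[OF FB i sub]])
      moreover have "\<forall>U<2 ^ ?m. M' (C + U) = M (C + U)" using M' X True b BC by simp
      then have "forced_table ?m k F (clauses_with_upto phi False v j) (\<lambda>U. M' (C + U))"
        by (rule forced_table_cong[OF FC])
      ultimately show ?thesis using M' X cw True b by simp
    next
      case b: False
      have "\<forall>U<2 ^ ?m. M' (C + U) = (if bit U i then min (M (C + U)) (M (C + (U - 2 ^ i))) else Suc k)"
        using M' X True b by simp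
      then have "forced_table ?m k F (insert i (clauses_with_upto phi False v j)) (\<lambda>U. M' (C + U))"
        by (rule forced_table_cong[OF forced_table_insert[OF FC i sub]])
      moreover have "\<forall>U<2 ^ ?m. M' (B + U) = M (B + U)" using M' X True b BC by simp
      then have "forced_table ?m k F (clauses_with_upto phi True v j) (\<lambda>U. M' (B + U))"
        by (rule forced_table_cong[OF FB])
      moreover have "\<forall>a. \<not> (B \<le> a \<and> a < B + 2 ^ ?m) \<and> \<not> (C \<le> a \<and> a < C + 2 ^ ?m) \<longrightarrow> M' a = M a"
        using M' X True b by auto
      ultimately show ?thesis using cw True b by simp
    qed
  next
    case False
    then show ?thesis using M' FB FC cw by simp
  qed
qed

lemma runs_force_occurrences:
  fixes phi :: cnf and N :: nat
  defines "m \<equiv> length phi" and "L \<equiv> length (occurrences phi)" and "P \<equiv> 2 ^ length phi"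
    and "B \<equiv> dp_base phi N + 2 ^ length phi" and "C \<equiv> dp_base phi N + 2 * 2 ^ length phi"
  assumes "layout phi N k p s" "fst s 32 = v"
    "forced_table m k F {} (\<lambda>U. snd s (B + U))" "forced_table m k F {} (\<lambda>U. snd s (C + U))"
  shows "runs force_occurrences s (2 + (L + 1) * (3 * m + 14 * P + 47))
    (\<lambda>s'. forced_table m k F (clauses_with phi True v) (\<lambda>U. snd s' (B + U))
      \<and> forced_table m k F (clauses_with phi False v) (\<lambda>U. snd s' (C + U))
      \<and> (\<forall>a. \<not> (B \<le> a \<and> a < B + P) \<and> \<not> (C \<le> a \<and> a < C + P) \<longrightarrow> snd s' a = snd s a)
      \<and> same_except (fst s) (fst s') {9, 34, 35, 36, 37, 38, 40, 41, 42, 43, 44, 45, 46, 47, 48, 49})"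
proof -
  let ?S = "{9, 34, 35, 36, 37, 38, 40, 41, 42, 43, 44, 45, 46, 47, 48, 49} :: nat set"
  have vals: "fst s 1 = 1" "fst s 13 = 0" "fst s 10 = N" "fst s 8 = L" "fst s 20 = 2 ^ m" "fst s 22 = B"
    "fst s 23 = C" "fst s 25 = Suc k" and occs: "stores_occs phi N L (snd s)"
    using assms(6) unfolding layout_def L_def m_def B_def C_def by simp_all
  have below: "N + 3 * L \<le> B" "B + P = C" unfolding B_def C_def dp_base_def L_def P_def by simp_all
  define I where "I u s' \<longleftrightarrow> u \<le> L \<and> fst s' 34 = N + 3 * (L - u)
    \<and> forced_table m k F (clauses_with_upto phi True v (L - u)) (\<lambda>U. snd s' (B + U))
    \<and> forced_table m k F (clauses_with_upto phi False v (L - u)) (\<lambda>U. snd s' (C + U))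
    \<and> (\<forall>a. \<not> (B \<le> a \<and> a < B + P) \<and> \<not> (C \<le> a \<and> a < C + P) \<longrightarrow> snd s' a = snd s a)
    \<and> same_except (fst s) (fst s') ?S" for u and s' :: state
  have step: "runs force_entry s1 (3 * m + 14 * 2 ^ m + 46) (\<lambda>s'. I u s' \<and> fst s' 35 = u)"
    if I: "I (Suc u) s1" and counter: "fst s1 35 = Suc u" for u s1
  proof -
    let ?j = "L - Suc u"
    have j: "?j < L" "L - u = Suc ?j" using I unfolding I_def by auto
    have pos: "fst s1 34 = N + 3 * ?j" and regs: "same_except (fst s) (fst s1) ?S"
      and FB: "forced_table m k F (clauses_with_upto phi True v ?j) (\<lambda>U. snd s1 (B + U))"
      and FC: "forced_table m k F (clauses_with_upto phi False v ?j) (\<lambda>U. snd s1 (C + U))"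
      and frame: "\<forall>a. \<not> (B \<le> a \<and> a < B + P) \<and> \<not> (C \<le> a \<and> a < C + P) \<longrightarrow> snd s1 a = snd s a"
      using I unfolding I_def by simp_all
    obtain b w i where occ: "occurrences phi ! ?j = (b, w, i)" by (cases "occurrences phi ! ?j") auto
    have jL: "?j < length (occurrences phi)" using j(1) L_def by simp
    have i: "i < m" using occurrence_clause_less[OF jL] occ unfolding m_def by simp
    have "N + 3 * ?j + 2 < B" using below j(1) by linarith
    then have "snd s1 (N + 3 * ?j) = snd s (N + 3 * ?j)" "snd s1 (N + 3 * ?j + 1) = snd s (N + 3 * ?j + 1)"
      "snd s1 (N + 3 * ?j + 2) = snd s (N + 3 * ?j + 2)" using frame below by simp_all
    then have read: "snd s1 (fst s1 34) = of_bool b" "snd s1 (fst s1 34 + 1) = w" "snd s1 (fst s1 34 + 2) = i"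
      using stores_occsD[OF occs j(1)] occ pos by simp_all
    have "fst s1 r = fst s r" if "r \<notin> ?S" for r using regs that unfolding same_except_def by blast
    then have regs1: "fst s1 20 = 2 ^ m" "fst s1 22 = B" "fst s1 23 = C" "fst s1 25 = Suc k"
      "fst s1 32 = v" "fst s1 13 = 0" "fst s1 1 = 1" using vals assms(7) by simp_all
    show ?thesis
    proof (rule runs_mono[OF runs_force_entry[OF read i regs1]])
      fix s' assume s': "fst s' 34 = fst s1 34 + 3 \<and> fst s' 35 = fst s1 35 - 1 \<and> same_except (fst s1) (fst s') ?S
        \<and> (if w = v
           then (\<forall>U<2 ^ m. snd s' ((if b then B else C) + U) = (if bit U i then min (snd s1 ((if b then B else C) + U))
                  (snd s1 ((if b then B else C) + (U - 2 ^ i))) else Suc k))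
             \<and> (\<forall>a. \<not> ((if b then B else C) \<le> a \<and> a < (if b then B else C) + 2 ^ m) \<longrightarrow> snd s' a = snd s1 a)
           else snd s' = snd s1)"
      have "forced_table m k F (clauses_with_upto phi True v (Suc ?j)) (\<lambda>U. snd s' (B + U))
          \<and> forced_table m k F (clauses_with_upto phi False v (Suc ?j)) (\<lambda>U. snd s' (C + U))
          \<and> (\<forall>a. \<not> (B \<le> a \<and> a < B + P) \<and> \<not> (C \<le> a \<and> a < C + P) \<longrightarrow> snd s' a = snd s1 a)"
        unfolding m_def P_def
        by (rule forced_tables_Suc[OF occ jL _ FB[unfolded m_def] FC[unfolded m_def] refl])
          (use below s' in \<open>simp_all add: P_def m_def\<close>)
      then have tables: "forced_table m k F (clauses_with_upto phi True v (L - u)) (\<lambda>U. snd s' (B + U))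
          \<and> forced_table m k F (clauses_with_upto phi False v (L - u)) (\<lambda>U. snd s' (C + U))
          \<and> (\<forall>a. \<not> (B \<le> a \<and> a < B + P) \<and> \<not> (C \<le> a \<and> a < C + P) \<longrightarrow> snd s' a = snd s a)"
        using frame j(2) by auto
      have "same_except (fst s) (fst s') ?S" using regs s' unfolding same_except_def by auto
      then show "I u s' \<and> fst s' 35 = u"
        unfolding I_def using tables s' pos counter j by simp
    qed simp
  qed
  have FL: "forced_table m k F (clauses_with_upto phi b v 0) (\<lambda>U. snd s (X + U))"
    if "forced_table m k F {} (\<lambda>U. snd s (X + U))" for b X
    using that unfolding clauses_with_upto_def by simp
  have init: "runs (Seq (Add 34 10 13) (Add 35 8 13)) s 2 (\<lambda>s'. I L s' \<and> fst s' 35 = L)"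
    using vals FL[OF assms(8)] FL[OF assms(9)] unfolding I_def same_except_def by simp
  have "runs force_occurrences s (2 + (L + 1) * (3 * m + 14 * 2 ^ m + 46 + 1)) (I 0)"
    unfolding force_occurrences_def by (rule runs_countdown_loop[OF init step])
  then show ?thesis
    by (rule runs_mono) (simp_all add: I_def clauses_with_upto_length[of phi, folded L_def] P_def m_def)
qed

definition add_variable :: com where
  "add_variable = Seq copy_table (Seq force_occurrences combine_tables)"

lemma runs_add_variable:
  fixes phi :: cnf and N :: nat
  defines "m \<equiv> length phi" and "L \<equiv> length (occurrences phi)" and "P \<equiv> 2 ^ length phi"
    and "A \<equiv> dp_base phi N"
  assumes "layout phi N k p s" "fst s 32 = v" "dp_table phi k W (\<lambda>U. snd s (A + U))" "v \<notin> W" "finite W"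
  shows "runs add_variable s (8 * P + 9 + (2 + (L + 1) * (3 * m + 14 * P + 47) + (13 * P + 14)))
    (\<lambda>s'. layout phi N k p s' \<and> dp_table phi k (insert v W) (\<lambda>U. snd s' (A + U))
      \<and> same_except (fst s) (fst s') {9, 34, 35, 36, 37, 38, 40, 41, 42, 43, 44, 45, 46, 47, 48, 49})"
proof -
  let ?B = "A + P" and ?C = "A + 2 * P"
  let ?F = "\<lambda>U. snd s (A + U)"
  have vals: "fst s 20 = P" "fst s 21 = A" "fst s 22 = ?B" "fst s 23 = ?C" "fst s 25 = Suc k"
    "fst s 13 = 0" "fst s 1 = 1" using assms(5) unfolding layout_def A_def P_def by simp_all
  have bounded: "\<forall>U<P. ?F U \<le> Suc k" using assms(7) unfolding dp_table_def P_def by simp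
  have "A + P \<le> ?B" "?B + P \<le> ?C" by simp_all
  note copy = runs_copy_table[OF vals(1-4,6,7) this]
  show ?thesis
    unfolding add_variable_def
  proof (rule runs_Seq[OF copy])
    fix s1 assume s1: "(\<forall>U<P. snd s1 (?B + U) = ?F U \<and> snd s1 (?C + U) = ?F U)
      \<and> (\<forall>a. \<not> (?B \<le> a \<and> a < ?B + P) \<and> \<not> (?C \<le> a \<and> a < ?C + P) \<longrightarrow> snd s1 a = snd s a)
      \<and> same_except (fst s) (fst s1) {44, 46, 47}"
    have layout1: "layout phi N k p s1"
      by (rule layout_preserved[OF assms(5), of s1 "{44, 46, 47}"]) (use s1 in \<open>auto simp: A_def\<close>)
    have forced1: "forced_table m k ?F {} (\<lambda>U. snd s1 (X + U))" if "X = ?B \<or> X = ?C" for X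
      using forced_table_cong[OF forced_table_empty[OF bounded[unfolded P_def]]] s1 that unfolding m_def P_def
      by auto
    have "fst s1 32 = v" using s1 assms(6) unfolding same_except_def by simp
    moreover have "forced_table (length phi) k ?F {} (\<lambda>U. snd s1 (dp_base phi N + 2 ^ length phi + U))"
      "forced_table (length phi) k ?F {} (\<lambda>U. snd s1 (dp_base phi N + 2 * 2 ^ length phi + U))"
      using forced1[of "A + P"] forced1[of "A + 2 * P"] unfolding m_def A_def P_def by simp_all
    ultimately have force: "runs force_occurrences s1 (2 + (L + 1) * (3 * m + 14 * P + 47))
      (\<lambda>s'. forced_table m k ?F (clauses_with phi True v) (\<lambda>U. snd s' (?B + U))
        \<and> forced_table m k ?F (clauses_with phi False v) (\<lambda>U. snd s' (?C + U))
        \<and> (\<forall>a. \<not> (?B \<le> a \<and> a < ?B + P) \<and> \<not> (?C \<le> a \<and> a < ?C + P) \<longrightarrow> snd s' a = snd s1 a)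
        \<and> same_except (fst s1) (fst s') {9, 34, 35, 36, 37, 38, 40, 41, 42, 43, 44, 45, 46, 47, 48, 49})"
      unfolding m_def L_def P_def A_def by (rule runs_force_occurrences[OF layout1])
    show "runs (Seq force_occurrences combine_tables) s1 (2 + (L + 1) * (3 * m + 14 * P + 47) + (13 * P + 14))
      (\<lambda>s'. layout phi N k p s' \<and> dp_table phi k (insert v W) (\<lambda>U. snd s' (A + U))
        \<and> same_except (fst s) (fst s') {9, 34, 35, 36, 37, 38, 40, 41, 42, 43, 44, 45, 46, 47, 48, 49})"
    proof (rule runs_Seq[OF force])
      fix s2 assume s2: "forced_table m k ?F (clauses_with phi True v) (\<lambda>U. snd s2 (?B + U))
        \<and> forced_table m k ?F (clauses_with phi False v) (\<lambda>U. snd s2 (?C + U))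
        \<and> (\<forall>a. \<not> (?B \<le> a \<and> a < ?B + P) \<and> \<not> (?C \<le> a \<and> a < ?C + P) \<longrightarrow> snd s2 a = snd s1 a)
        \<and> same_except (fst s1) (fst s2) {9, 34, 35, 36, 37, 38, 40, 41, 42, 43, 44, 45, 46, 47, 48, 49}"
      have regs2: "same_except (fst s) (fst s2) {9, 34, 35, 36, 37, 38, 40, 41, 42, 43, 44, 45, 46, 47, 48, 49}"
        using s1 s2 unfolding same_except_def by auto
      then have c: "fst s2 20 = P" "fst s2 21 = A" "fst s2 22 = ?B" "fst s2 23 = ?C" "fst s2 25 = Suc k"
        "fst s2 13 = 0" "fst s2 1 = 1" using vals unfolding same_except_def by simp_all
      have "A + P \<le> ?B" "?B + P \<le> ?C" by simp_all
      note combine = runs_combine_tables[OF c this]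
      show "runs combine_tables s2 (13 * P + 14)
        (\<lambda>s'. layout phi N k p s' \<and> dp_table phi k (insert v W) (\<lambda>U. snd s' (A + U))
          \<and> same_except (fst s) (fst s') {9, 34, 35, 36, 37, 38, 40, 41, 42, 43, 44, 45, 46, 47, 48, 49})"
      proof (rule runs_mono[OF combine])
        fix s3 assume s3: "(\<forall>U<P. snd s3 (A + U) = min (min (snd s2 (?B + U) + 1) (Suc k)) (snd s2 (?C + U)))
          \<and> (\<forall>a. \<not> (A \<le> a \<and> a < A + P) \<longrightarrow> snd s3 a = snd s2 a)
          \<and> same_except (fst s2) (fst s3) {44, 46, 47, 48, 49}"
        have "dp_table phi k (insert v W) (\<lambda>U. min (min (snd s2 (?B + U) + 1) (Suc k)) (snd s2 (?C + U)))"
          using dp_table_insert[OF assms(7-9)] s2 unfolding m_def by blast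
        then have table: "dp_table phi k (insert v W) (\<lambda>U. snd s3 (A + U))"
          by (rule dp_table_cong) (use s3 in \<open>simp add: P_def\<close>)
        have "same_except (fst s) (fst s3) {9, 34, 35, 36, 37, 38, 40, 41, 42, 43, 44, 45, 46, 47, 48, 49}"
          using regs2 s3 unfolding same_except_def by auto
        moreover have "\<forall>a<A. snd s3 a = snd s a" using s1 s2 s3 unfolding P_def by auto
        ultimately show "layout phi N k p s3 \<and> dp_table phi k (insert v W) (\<lambda>U. snd s3 (A + U))
            \<and> same_except (fst s) (fst s3) {9, 34, 35, 36, 37, 38, 40, 41, 42, 43, 44, 45, 46, 47, 48, 49}"
          using layout_preserved[OF assms(5)] table unfolding A_def by simp
      qed simp
    qed
  qed
qed

definition var_entry :: com where
  "var_entry = Seq (Seq (Add 9 30 1) (Load 32 9)) (Seq seen_before (Seq (If 33 Skip add_variable)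
     (Seq (Add 30 30 1) (Seq (Add 30 30 1) (Seq (Add 30 30 1) (Seq (Add 39 39 1) (Sub 31 31 1)))))))"

definition dp_loop :: com where
  "dp_loop = Seq (Seq (Add 30 10 13) (Seq (Add 31 8 13) (Const 39 0))) (While 31 var_entry)"

lemma runs_var_entry:
  fixes phi :: cnf and N :: nat
  defines "m \<equiv> length phi" and "L \<equiv> length (occurrences phi)" and "P \<equiv> 2 ^ length phi"
    and "A \<equiv> dp_base phi N"
  defines "T \<equiv> 8 * P + 9 + (2 + (L + 1) * (3 * m + 14 * P + 47) + (13 * P + 14))"
  assumes "layout phi N k p s" "fst s 30 = N + 3 * j" "fst s 39 = j" "j < L"
    "dp_table phi k (vars_upto phi j) (\<lambda>U. snd s (A + U))"
  shows "runs var_entry s (2 + (12 * L + 15 + (T + 1 + 5))) (\<lambda>s'. layout phi N k p s'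
    \<and> fst s' 30 = N + 3 * Suc j \<and> fst s' 39 = Suc j \<and> fst s' 31 = fst s 31 - 1
    \<and> dp_table phi k (vars_upto phi (Suc j)) (\<lambda>U. snd s' (A + U)))"
proof -
  let ?v = "fst (snd (occurrences phi ! j))"
  let ?kept = "\<lambda>s'. layout phi N k p s' \<and> fst s' 30 = N + 3 * j \<and> fst s' 39 = j \<and> fst s' 31 = fst s 31"
  have one: "fst s 1 = 1" and occs: "stores_occs phi N L (snd s)"
    using assms(6) unfolding layout_def L_def by simp_all
  have read: "runs (Seq (Add 9 30 1) (Load 32 9)) s 2 (\<lambda>s1. ?kept s1 \<and> fst s1 32 = ?v \<and> snd s1 = snd s)"
  proof -
    have "snd s (N + 3 * j + 1) = ?v" using stores_occsD(2)[OF occs assms(9)] .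
    moreover have "layout phi N k p ((fst s)(9 := N + 3 * j + 1, 32 := ?v), snd s)"
      by (rule layout_preserved[OF assms(6), of _ "{9, 32}"]) (auto simp: same_except_def)
    ultimately show ?thesis using assms(7,8) one by simp
  qed
  have seen: "runs seen_before s1 (12 * L + 15) (\<lambda>s2. ?kept s2 \<and> fst s2 32 = ?v
      \<and> (fst s2 33 \<noteq> 0 \<longleftrightarrow> ?v \<in> vars_upto phi j) \<and> snd s2 = snd s)" if s1: "?kept s1 \<and> fst s1 32 = ?v \<and> snd s1 = snd s" for s1
  proof (rule runs_mono[OF runs_seen_before[of phi N k p s1 j ?v]])
    fix s2 assume s2: "(fst s2 33 \<noteq> 0 \<longleftrightarrow> ?v \<in> vars_upto phi j)
      \<and> same_except (fst s1) (fst s2) {9, 33, 34, 35, 36, 37, 38} \<and> snd s2 = snd s1"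
    have "layout phi N k p s2"
      by (rule layout_preserved[of phi N k p s1 s2 "{9, 33, 34, 35, 36, 37, 38}"]) (use s1 s2 in auto)
    then show "?kept s2 \<and> fst s2 32 = ?v \<and> (fst s2 33 \<noteq> 0 \<longleftrightarrow> ?v \<in> vars_upto phi j) \<and> snd s2 = snd s"
      using s1 s2 unfolding same_except_def by simp
  qed (use s1 assms(9) in \<open>simp_all add: L_def\<close>)
  have branch: "runs (If 33 Skip add_variable) s2 (T + 1)
      (\<lambda>s3. ?kept s3 \<and> dp_table phi k (vars_upto phi (Suc j)) (\<lambda>U. snd s3 (A + U)))"
    if s2: "?kept s2 \<and> fst s2 32 = ?v \<and> (fst s2 33 \<noteq> 0 \<longleftrightarrow> ?v \<in> vars_upto phi j) \<and> snd s2 = snd s" for s2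
  proof (cases "?v \<in> vars_upto phi j")
    case True
    then have "vars_upto phi (Suc j) = vars_upto phi j" by (auto simp: vars_upto_Suc)
    then show ?thesis using True s2 assms(10) by (simp add: T_def)
  next
    case False
    have "runs add_variable s2 T (\<lambda>s3. layout phi N k p s3
        \<and> dp_table phi k (insert ?v (vars_upto phi j)) (\<lambda>U. snd s3 (A + U))
        \<and> same_except (fst s2) (fst s3) {9, 34, 35, 36, 37, 38, 40, 41, 42, 43, 44, 45, 46, 47, 48, 49})"
      unfolding T_def m_def L_def P_def A_def
      by (rule runs_add_variable) (use s2 False assms(10) in \<open>auto simp: vars_upto_def A_def\<close>)
    then show ?thesis using False s2 unfolding vars_upto_Suc same_except_def by (auto elim!: wp_mono)
  qed
  have advance: "runs (Seq (Add 30 30 1) (Seq (Add 30 30 1) (Seq (Add 30 30 1) (Seq (Add 39 39 1) (Sub 31 31 1)))))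
      s3 5 (\<lambda>s'. layout phi N k p s' \<and> fst s' 30 = N + 3 * Suc j \<and> fst s' 39 = Suc j
        \<and> fst s' 31 = fst s 31 - 1 \<and> dp_table phi k (vars_upto phi (Suc j)) (\<lambda>U. snd s' (A + U)))"
    if s3: "?kept s3 \<and> dp_table phi k (vars_upto phi (Suc j)) (\<lambda>U. snd s3 (A + U))" for s3
  proof -
    have "fst s3 1 = 1" using s3 unfolding layout_def by simp
    then have "runs (Seq (Add 30 30 1) (Seq (Add 30 30 1) (Seq (Add 30 30 1) (Seq (Add 39 39 1) (Sub 31 31 1)))))
      s3 5 (\<lambda>s'. same_except (fst s3) (fst s') {30, 31, 39} \<and> snd s' = snd s3
        \<and> fst s' 30 = N + 3 * Suc j \<and> fst s' 39 = Suc j \<and> fst s' 31 = fst s 31 - 1)"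
      using s3 by (simp add: same_except_def)
    then show ?thesis
    proof (rule runs_mono)
      fix s' assume s': "same_except (fst s3) (fst s') {30, 31, 39} \<and> snd s' = snd s3
        \<and> fst s' 30 = N + 3 * Suc j \<and> fst s' 39 = Suc j \<and> fst s' 31 = fst s 31 - 1"
      have "layout phi N k p s'"
        by (rule layout_preserved[of _ _ _ _ s3 _ "{30, 31, 39}"]) (use s3 s' in auto)
      then show "layout phi N k p s' \<and> fst s' 30 = N + 3 * Suc j \<and> fst s' 39 = Suc j
        \<and> fst s' 31 = fst s 31 - 1 \<and> dp_table phi k (vars_upto phi (Suc j)) (\<lambda>U. snd s' (A + U))"
        using s3 s' by simp
    qed simp
  qed
  show ?thesis
    unfolding var_entry_def
    by (rule runs_Seq[OF read runs_Seq[OF seen runs_Seq[OF branch advance]]])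
qed

lemma runs_dp_loop:
  fixes phi :: cnf and N :: nat
  defines "m \<equiv> length phi" and "L \<equiv> length (occurrences phi)" and "P \<equiv> 2 ^ length phi"
    and "A \<equiv> dp_base phi N"
  defines "T \<equiv> 8 * P + 9 + (2 + (L + 1) * (3 * m + 14 * P + 47) + (13 * P + 14))"
  assumes "layout phi N k p s" "dp_table phi k {} (\<lambda>U. snd s (A + U))"
  shows "runs dp_loop s (3 + (L + 1) * (2 + (12 * L + 15 + (T + 1 + 5)) + 1))
    (\<lambda>s'. layout phi N k p s' \<and> dp_table phi k (vars_of phi) (\<lambda>U. snd s' (A + U)))"
proof -
  define I where "I u s' \<longleftrightarrow> u \<le> L \<and> layout phi N k p s' \<and> fst s' 30 = N + 3 * (L - u)
    \<and> fst s' 39 = L - u \<and> dp_table phi k (vars_upto phi (L - u)) (\<lambda>U. snd s' (A + U))" for u s'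
  have step: "runs var_entry s1 (2 + (12 * L + 15 + (T + 1 + 5))) (\<lambda>s'. I u s' \<and> fst s' 31 = u)"
    if I: "I (Suc u) s1" and counter: "fst s1 31 = Suc u" for u s1
  proof -
    have j: "L - Suc u < L" "Suc (L - Suc u) = L - u" using I unfolding I_def by auto
    have "runs var_entry s1 (2 + (12 * L + 15 + (T + 1 + 5))) (\<lambda>s'. layout phi N k p s'
      \<and> fst s' 30 = N + 3 * Suc (L - Suc u) \<and> fst s' 39 = Suc (L - Suc u) \<and> fst s' 31 = fst s1 31 - 1
      \<and> dp_table phi k (vars_upto phi (Suc (L - Suc u))) (\<lambda>U. snd s' (A + U)))"
      using runs_var_entry[of phi N k p s1 "L - Suc u", folded m_def L_def P_def A_def, folded T_def] I j
      unfolding I_def by simp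
    then show ?thesis by (rule runs_mono) (use counter j in \<open>auto simp: I_def\<close>)
  qed
  have "fst s 1 = 1" "fst s 10 = N" "fst s 8 = L" "fst s 13 = 0"
    using assms(6) unfolding layout_def L_def by simp_all
  moreover have "layout phi N k p ((fst s)(30 := N, 31 := L, 39 := 0), snd s)"
    by (rule layout_preserved[OF assms(6), of _ "{30, 31, 39}"]) (auto simp: same_except_def)
  ultimately have init: "runs (Seq (Add 30 10 13) (Seq (Add 31 8 13) (Const 39 0))) s 3 (\<lambda>s'. I L s' \<and> fst s' 31 = L)"
    using assms(7) unfolding I_def vars_upto_def by simp
  have "runs dp_loop s (3 + (L + 1) * (2 + (12 * L + 15 + (T + 1 + 5)) + 1)) (I 0)"
    unfolding dp_loop_def by (rule runs_countdown_loop[OF init step])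
  then show ?thesis by (rule runs_mono) (simp_all add: I_def vars_upto_length[of phi, folded L_def])
qed

definition set_bases :: com where
  "set_bases = Seq (Add 21 11 13) (Seq (Add 22 21 20) (Seq (Add 23 22 20) (Seq (Add 24 23 20) (Add 25 2 1))))"

definition set_up :: com where
  "set_up = Seq read_input (Seq (pow2_into 20 4 26) set_bases)"

definition max_k_sat_prog :: com where
  "max_k_sat_prog = Seq set_up (Seq init_table (Seq dp_loop (Seq popcount_table final_scan)))"

lemma runs_set_up:
  fixes n k p :: nat and phi :: cnf
  defines "N \<equiv> length (encode n phi k p)"
  shows "runs set_up (init_state (encode n phi k p)) (50 * (N + 1) ^ 2 + (3 * length phi + 5 + 5))
    (layout phi N k p)"
  unfolding set_up_def
proof (rule runs_Seq[OF runs_read_input[where n = n and k = k and p = p and phi = phi, folded N_def]])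
  fix s1 :: state assume s1: "fst s1 1 = 1 \<and> fst s1 13 = 0 \<and> fst s1 2 = k \<and> fst s1 3 = p \<and> fst s1 4 = length phi
    \<and> fst s1 8 = length (occurrences phi) \<and> fst s1 10 = N \<and> fst s1 11 = N + 3 * length (occurrences phi)
    \<and> stores_occs phi N (length (occurrences phi)) (snd s1)"
  have pow: "runs (pow2_into 20 4 26) s1 (3 * length phi + 5)
      (\<lambda>s2. fst s2 20 = 2 ^ length phi \<and> same_except (fst s1) (fst s2) {20, 26} \<and> snd s2 = snd s1)"
    by (rule runs_pow2_into) (use s1 in simp_all)
  show "runs (Seq (pow2_into 20 4 26) set_bases) s1 (3 * length phi + 5 + 5) (layout phi N k p)"
  proof (rule runs_Seq[OF pow])
    fix s2 assume "fst s2 20 = 2 ^ length phi \<and> same_except (fst s1) (fst s2) {20, 26} \<and> snd s2 = snd s1"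
    with s1 show "runs set_bases s2 5 (layout phi N k p)"
      unfolding set_bases_def layout_def dp_base_def same_except_def by simp
  qed
qed

lemma max_k_sat_iff_dp_table:
  assumes "wf_cnf n phi" "dp_table phi k (vars_of phi) F"
  shows "(\<exists>U<2 ^ length phi. p \<le> card (bitset U) \<and> F U \<le> k) \<longleftrightarrow> max_k_sat n phi k p"
proof -
  have "(\<exists>U<2 ^ length phi. p \<le> card (bitset U) \<and> F U \<le> k)
      \<longleftrightarrow> (\<exists>U<2 ^ length phi. p \<le> card (bitset U) \<and> achievable phi (vars_of phi) k (bitset U))"
    using assms(2) unfolding dp_table_def by auto
  also have "\<dots> \<longleftrightarrow> (\<exists>T. achievable phi (vars_of phi) k T \<and> p \<le> card T)"
  proof
    assume "\<exists>T. achievable phi (vars_of phi) k T \<and> p \<le> card T"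
    then obtain T where T: "achievable phi (vars_of phi) k T" "p \<le> card T" by blast
    then have "T \<subseteq> {..<length phi}" using sat_clauses_subset unfolding achievable_def by blast
    then obtain U where "U < 2 ^ length phi" "bitset U = T" using bitset_surj by blast
    then show "\<exists>U<2 ^ length phi. p \<le> card (bitset U) \<and> achievable phi (vars_of phi) k (bitset U)"
      using T by blast
  qed blast
  also have "\<dots> \<longleftrightarrow> max_k_sat n phi k p" using max_k_sat_iff_achievable[OF assms(1)] by simp
  finally show ?thesis .
qed

lemma runs_max_k_sat_prog:
  fixes n k p :: nat and phi :: cnf
  assumes "wf_cnf n phi"
  defines "N \<equiv> length (encode n phi k p)" and "m \<equiv> length phi" and "L \<equiv> length (occurrences phi)"
    and "P \<equiv> 2 ^ length phi"
  defines "T \<equiv> 8 * P + 9 + (2 + (L + 1) * (3 * m + 14 * P + 47) + (13 * P + 14))"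
  shows "runs max_k_sat_prog (init_state (encode n phi k p))
    (50 * (N + 1) ^ 2 + (3 * m + 5 + 5) + (4 * P + 6 + (3 + (L + 1) * (2 + (12 * L + 15 + (T + 1 + 5)) + 1)
      + (16 * P + 10 + (12 * P + 15)))))
    (\<lambda>s. fst s 0 \<noteq> 0 \<longleftrightarrow> max_k_sat n phi k p)"
  unfolding max_k_sat_prog_def
proof (rule runs_Seq[OF runs_set_up[where n = n and k = k and p = p and phi = phi, folded N_def m_def]])
  let ?A = "dp_base phi N"
  let ?C = "dp_base phi N + 3 * P"
  fix s1 assume s1: "layout phi N k p s1"
  have regs: "fst s1 20 = P" "fst s1 21 = ?A" "fst s1 24 = ?C" "fst s1 25 = Suc k" "fst s1 2 = k"
    "fst s1 3 = p" "fst s1 13 = 0" "fst s1 1 = 1"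
    using s1 unfolding layout_def P_def by simp_all
  have init: "runs init_table s1 (4 * P + 6)
      (\<lambda>s2. layout phi N k p s2 \<and> dp_table phi k {} (\<lambda>U. snd s2 (?A + U)))"
  proof (rule runs_mono[OF runs_init_table[OF regs(1,2,4,7,8)]])
    fix s2 assume s2: "(\<forall>U<P. snd s2 (?A + U) = (if U = 0 then 0 else Suc k))
      \<and> (\<forall>a. a < ?A \<or> ?A + P \<le> a \<longrightarrow> snd s2 a = snd s1 a) \<and> same_except (fst s1) (fst s2) {44, 46}"
    show "layout phi N k p s2 \<and> dp_table phi k {} (\<lambda>U. snd s2 (?A + U))"
      using layout_preserved[OF s1, of s2 "{44, 46}"] dp_table_cong[OF dp_table_empty] s2
      unfolding P_def by simp
  qed (simp_all add: P_def)
  have final: "runs (Seq popcount_table final_scan) s3 (16 * P + 10 + (12 * P + 15))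
      (\<lambda>s. fst s 0 \<noteq> 0 \<longleftrightarrow> max_k_sat n phi k p)"
    if s3: "layout phi N k p s3 \<and> dp_table phi k (vars_of phi) (\<lambda>U. snd s3 (?A + U))" for s3
  proof (rule runs_Seq[OF runs_popcount_table])
    have regs3: "fst s3 20 = P" "fst s3 21 = ?A" "fst s3 24 = ?C" "fst s3 2 = k" "fst s3 3 = p"
      "fst s3 13 = 0" "fst s3 1 = 1" using s3 unfolding layout_def P_def by simp_all
    then show "fst s3 20 = P" "0 < P" "fst s3 24 = ?C" "fst s3 13 = 0" "fst s3 1 = 1"
      unfolding P_def by simp_all
    fix s4 assume s4: "(\<forall>U<P. snd s4 (?C + U) = card (bitset U))
      \<and> (\<forall>a. \<not> (?C \<le> a \<and> a < ?C + P) \<longrightarrow> snd s4 a = snd s3 a)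
      \<and> same_except (fst s3) (fst s4) {37, 38, 42, 44, 45, 46, 47, 49}"
    have "fst s4 20 = P" "fst s4 21 = ?A" "fst s4 24 = ?C" "fst s4 2 = k" "fst s4 3 = p"
      "fst s4 13 = 0" "fst s4 1 = 1" using regs3 s4 unfolding same_except_def by simp_all
    then show "runs final_scan s4 (12 * P + 15) (\<lambda>s. fst s 0 \<noteq> 0 \<longleftrightarrow> max_k_sat n phi k p)"
    proof (rule runs_mono[OF runs_final_scan], simp)
      have "(\<exists>U<P. p \<le> snd s4 (?C + U) \<and> snd s4 (?A + U) \<le> k) \<longleftrightarrow>
          (\<exists>U<2 ^ length phi. p \<le> card (bitset U) \<and> snd s3 (?A + U) \<le> k)"
        using s4 unfolding P_def by auto
      also have "\<dots> \<longleftrightarrow> max_k_sat n phi k p"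
        using max_k_sat_iff_dp_table[OF assms(1)] s3 by blast
      finally show "\<And>s. (fst s 0 \<noteq> 0 \<longleftrightarrow> (\<exists>U<P. p \<le> snd s4 (?C + U) \<and> snd s4 (?A + U) \<le> k))
          \<Longrightarrow> (fst s 0 \<noteq> 0 \<longleftrightarrow> max_k_sat n phi k p)" by simp
    qed
  qed
  show "runs (Seq init_table (Seq dp_loop (Seq popcount_table final_scan))) s1
    (4 * P + 6 + (3 + (L + 1) * (2 + (12 * L + 15 + (T + 1 + 5)) + 1) + (16 * P + 10 + (12 * P + 15))))
    (\<lambda>s. fst s 0 \<noteq> 0 \<longleftrightarrow> max_k_sat n phi k p)"
    unfolding T_def m_def L_def P_def
    by (rule runs_Seq[OF init[unfolded P_def] runs_Seq[OF runs_dp_loop final[unfolded P_def]]]) simp_all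
qed

lemma max_k_sat_prog_time:
  fixes N L m P :: nat
  assumes "L \<le> N" "m \<le> N" "1 \<le> P"
  shows "50 * (N + 1) ^ 2 + (3 * m + 5 + 5) + (4 * P + 6 + (3 + (L + 1) * (2 + (12 * L + 15
      + (8 * P + 9 + (2 + (L + 1) * (3 * m + 14 * P + 47) + (13 * P + 14)) + 1 + 5)) + 1)
      + (16 * P + 10 + (12 * P + 15)))) \<le> 300 * (P * (N + 1) ^ 3)"
proof -
  define X where "X = N + 1"
  have X: "1 \<le> X" "L + 1 \<le> X" "m + 1 \<le> X" unfolding X_def using assms by simp_all
  have P: "P \<le> P * X" "X \<le> P * X" using X assms by simp_all
  have P2: "P * X \<le> P * X ^ 2" "X * X \<le> P * X ^ 2" and P3: "P * X ^ 2 \<le> P * X ^ 3"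
    using X assms by (simp_all add: power2_eq_square power3_eq_cube mult_le_mono)
  have "3 * m + 14 * P + 47 \<le> 64 * (P * X)" using X P by linarith
  then have "(L + 1) * (3 * m + 14 * P + 47) \<le> X * (64 * (P * X))" using X(2) by (rule mult_le_mono[rotated])
  also have "\<dots> = 64 * (P * X ^ 2)" by (simp add: power2_eq_square)
  finally have inner: "(L + 1) * (3 * m + 14 * P + 47) \<le> 64 * (P * X ^ 2)" .
  have "2 + (12 * L + 15 + (8 * P + 9 + (2 + (L + 1) * (3 * m + 14 * P + 47) + (13 * P + 14)) + 1 + 5)) + 1
      \<le> 146 * (P * X ^ 2)" using inner X P P2 by linarith
  then have "(L + 1) * (2 + (12 * L + 15 + (8 * P + 9 + (2 + (L + 1) * (3 * m + 14 * P + 47) + (13 * P + 14))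
      + 1 + 5)) + 1) \<le> X * (146 * (P * X ^ 2))" using X(2) by (rule mult_le_mono[rotated])
  also have "\<dots> = 146 * (P * X ^ 3)" by (simp add: power2_eq_square power3_eq_cube)
  finally have loop: "(L + 1) * (2 + (12 * L + 15 + (8 * P + 9 + (2 + (L + 1) * (3 * m + 14 * P + 47)
      + (13 * P + 14)) + 1 + 5)) + 1) \<le> 146 * (P * X ^ 3)" .
  have "50 * (N + 1) ^ 2 \<le> 50 * (P * X ^ 3)" using P2 P3 unfolding X_def power2_eq_square by linarith
  then show ?thesis using loop X P P2 P3 unfolding X_def by linarith
qed

lemma length_le_input_size: "length xs \<le> input_size xs"
  unfolding input_size_def by (induction xs) auto

lemma max_k_sat_prog_correct:
  assumes "wf_cnf n phi"
  shows "\<exists>t s'. exec max_k_sat_prog (init_state (encode n phi k p)) t s'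
    \<and> (fst s' 0 \<noteq> 0 \<longleftrightarrow> max_k_sat n phi k p)
    \<and> real t \<le> 300 * 2 ^ length phi * (real (input_size (encode n phi k p)) + 1) ^ 3"
proof -
  let ?N = "length (encode n phi k p)" and ?S = "input_size (encode n phi k p)"
  obtain t s' where run: "exec max_k_sat_prog (init_state (encode n phi k p)) t s'"
    and answer: "fst s' 0 \<noteq> 0 \<longleftrightarrow> max_k_sat n phi k p"
    and steps: "t \<le> 50 * (?N + 1) ^ 2 + (3 * length phi + 5 + 5) + (4 * 2 ^ length phi + 6
      + (3 + (length (occurrences phi) + 1) * (2 + (12 * length (occurrences phi) + 15
      + (8 * 2 ^ length phi + 9 + (2 + (length (occurrences phi) + 1) * (3 * length phi + 14 * 2 ^ length phi + 47)
      + (13 * 2 ^ length phi + 14)) + 1 + 5)) + 1) + (16 * 2 ^ length phi + 10 + (12 * 2 ^ length phi + 15))))"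
    using runs_max_k_sat_prog[OF assms, of k p] unfolding wp_def by blast
  have "length (occurrences phi) \<le> ?N" "length phi \<le> ?N" "1 \<le> (2::nat) ^ length phi"
    using length_occurrences_le_length_encode length_le_length_encode by simp_all
  with steps have "t \<le> 300 * (2 ^ length phi * (?N + 1) ^ 3)"
    by (rule order_trans[OF _ max_k_sat_prog_time])
  also have "\<dots> \<le> 300 * (2 ^ length phi * (?S + 1) ^ 3)"
    using length_le_input_size[of "encode n phi k p"] by (intro mult_le_mono order.refl power_mono) simp_all
  finally have "real t \<le> real (300 * (2 ^ length phi * (?S + 1) ^ 3))" by (simp only: of_nat_le_iff)
  then have "real t \<le> 300 * 2 ^ length phi * (real ?S + 1) ^ 3" by (simp add: mult.assoc add.commute)
  then show ?thesis using run answer by blast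
qed

theorem lemma1:
  shows "\<exists>(P :: com) (c :: real) (d :: nat). \<forall>n k p phi. wf_cnf n phi \<longrightarrow>
           (\<exists>t s'. exec P (init_state (encode n phi k p)) t s'
              \<and> (fst s' 0 \<noteq> 0 \<longleftrightarrow> max_k_sat n phi k p)
              \<and> real t \<le> c * 2 ^ length phi * (real (input_size (encode n phi k p)) + 1) ^ d)"
  using max_k_sat_prog_correct by blast

end
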